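(* Let $(A,\mathfrak{m})$ be a Cohen–Macaulay local ring of dimension $1$, $L$ a non-free maximal Cohen–Macaulay $A$-module, and $M=\operatorname{Syz}^A_1(L)$. If $x$ is $(A\oplus M\oplus L)$-superficial, then $\mathfrak{m}^{e_0(A)-1}M\subseteq xM$.
   Context: $e_0(A)$ is the multiplicity of $A$. $\operatorname{Syz}^A_1(L)$ is the first syzygy in a minimal free resolution. $x\in\mathfrak{m}$ is superficial for a module $N$ if there is $c>0$ with $(\mathfrak{m}^nN:_Nx)\cap\mathfrak{m}^cN=\mathfrak{m}^{n-1}N$ for all $n>c$. *)

theory Defs
  imports Complex_Main "HOL-Library.Function_Algebras" "HOL-Library.Product_Plus"
          "HOL-Library.Extended_Nat"
begin

text \<open>Commutative algebra over a commutative ring 'a (the whole type is the ring A).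
  A module is a carrier set N inside an abelian group type 'm, with a scalar action
  s :: 'a => 'm => 'm (the module axioms are the library locale module s);
  submodules, spans and (in)dependence are the library notions of HOL.Modules.\<close>

definition ideal :: "'a::comm_ring_1 set \<Rightarrow> bool" where
  "ideal I \<longleftrightarrow> module.subspace ((*)) I"

definition prime_ideal :: "'a::comm_ring_1 set \<Rightarrow> bool" where
  "prime_ideal P \<longleftrightarrow> ideal P \<and> P \<noteq> UNIV \<and> (\<forall>a b. a * b \<in> P \<longrightarrow> a \<in> P \<or> b \<in> P)"

definition noetherian_ring :: "'a::comm_ring_1 itself \<Rightarrow> bool" where
  "noetherian_ring _ \<longleftrightarrow>
     (\<forall>I::'a set. ideal I \<longrightarrow> (\<exists>B. finite B \<and> module.span ((*)) B = I))"

definition local_ring :: "'a::comm_ring_1 set \<Rightarrow> bool" where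
  "local_ring m \<longleftrightarrow> ideal m \<and> m = {x. \<not> x dvd 1}"

definition krull_dim :: "'a::comm_ring_1 itself \<Rightarrow> enat" where
  "krull_dim _ = Sup {enat n | n. \<exists>P :: nat \<Rightarrow> 'a set.
      (\<forall>i\<le>n. prime_ideal (P i)) \<and> (\<forall>i<n. P i \<subset> P (Suc i))}"

fun ideal_pow :: "'a::comm_ring_1 set \<Rightarrow> nat \<Rightarrow> 'a set" where
  "ideal_pow m 0 = UNIV"
| "ideal_pow m (Suc n) = module.span ((*)) {a * b | a b. a \<in> m \<and> b \<in> ideal_pow m n}"

definition ideal_smult :: "('a::comm_ring_1 \<Rightarrow> 'm::ab_group_add \<Rightarrow> 'm) \<Rightarrow> 'a set \<Rightarrow> 'm set \<Rightarrow> 'm set" where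
  "ideal_smult s I N = module.span s {s r v | r v. r \<in> I \<and> v \<in> N}"

definition fin_gen_module :: "('a::comm_ring_1 \<Rightarrow> 'm::ab_group_add \<Rightarrow> 'm) \<Rightarrow> 'm set \<Rightarrow> bool" where
  "fin_gen_module s N \<longleftrightarrow> module.subspace s N \<and> (\<exists>B. finite B \<and> B \<subseteq> N \<and> module.span s B = N)"

definition free_module :: "('a::comm_ring_1 \<Rightarrow> 'm::ab_group_add \<Rightarrow> 'm) \<Rightarrow> 'm set \<Rightarrow> bool" where
  "free_module s N \<longleftrightarrow> (\<exists>B. B \<subseteq> N \<and> \<not> module.dependent s B \<and> module.span s B = N)"

definition regular_seq :: "('a::comm_ring_1 \<Rightarrow> 'm::ab_group_add \<Rightarrow> 'm) \<Rightarrow> 'a set \<Rightarrow> 'm set \<Rightarrow> 'a list \<Rightarrow> bool" where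
  "regular_seq s m N xs \<longleftrightarrow> set xs \<subseteq> m \<and>
     (\<forall>i<length xs. \<forall>v\<in>N. s (xs ! i) v \<in> ideal_smult s (set (take i xs)) N
          \<longrightarrow> v \<in> ideal_smult s (set (take i xs)) N) \<and>
     N \<noteq> ideal_smult s (set xs) N"

definition depth :: "('a::comm_ring_1 \<Rightarrow> 'm::ab_group_add \<Rightarrow> 'm) \<Rightarrow> 'a set \<Rightarrow> 'm set \<Rightarrow> enat" where
  "depth s m N = Sup {enat (length xs) | xs. regular_seq s m N xs}"

definition cohen_macaulay_local :: "'a::comm_ring_1 set \<Rightarrow> bool" where
  "cohen_macaulay_local m \<longleftrightarrow> noetherian_ring TYPE('a) \<and> local_ring m \<and>
     depth ((*)) m (UNIV::'a set) = krull_dim TYPE('a)"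

definition max_CM_module :: "('a::comm_ring_1 \<Rightarrow> 'm::ab_group_add \<Rightarrow> 'm) \<Rightarrow> 'a set \<Rightarrow> 'm set \<Rightarrow> bool" where
  "max_CM_module s m N \<longleftrightarrow> fin_gen_module s N \<and> depth s m N = krull_dim TYPE('a)"

text \<open>Length of N/K: supremum of lengths of strict chains of submodules from K to N.\<close>
definition module_length :: "('a::comm_ring_1 \<Rightarrow> 'm::ab_group_add \<Rightarrow> 'm) \<Rightarrow> 'm set \<Rightarrow> 'm set \<Rightarrow> enat" where
  "module_length s K N = Sup {enat n | n. \<exists>C :: nat \<Rightarrow> 'm set. C 0 = K \<and> C n = N \<and>
      (\<forall>i\<le>n. module.subspace s (C i)) \<and> (\<forall>i<n. C i \<subset> C (Suc i))}"

definition multiplicity :: "'a::comm_ring_1 set \<Rightarrow> nat" where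
  "multiplicity m = (THE e::nat. (\<lambda>n. fact (the_enat (krull_dim TYPE('a)))
       * real (the_enat (module_length ((*)) (ideal_pow m n) (UNIV::'a set)))
       / real n ^ the_enat (krull_dim TYPE('a))) \<longlonglongrightarrow> real e)"

definition superficial :: "('a::comm_ring_1 \<Rightarrow> 'm::ab_group_add \<Rightarrow> 'm) \<Rightarrow> 'a set \<Rightarrow> 'm set \<Rightarrow> 'a \<Rightarrow> bool" where
  "superficial s m N x \<longleftrightarrow> x \<in> m \<and> (\<exists>c>0. \<forall>n>c.
     {v\<in>N. s x v \<in> ideal_smult s (ideal_pow m n) N} \<inter> ideal_smult s (ideal_pow m c) N
       = ideal_smult s (ideal_pow m (n - 1)) N)"

text \<open>Free module A^n realised as functions nat => 'a vanishing outside {..<n}.\<close>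
definition free_scale :: "'a::comm_ring_1 \<Rightarrow> (nat \<Rightarrow> 'a) \<Rightarrow> (nat \<Rightarrow> 'a)" where
  "free_scale r u = (\<lambda>i. r * u i)"

definition free_carrier :: "nat \<Rightarrow> (nat \<Rightarrow> 'a::comm_ring_1) set" where
  "free_carrier n = {u. \<forall>i\<ge>n. u i = 0}"

definition minimal_generators :: "('a::comm_ring_1 \<Rightarrow> 'm::ab_group_add \<Rightarrow> 'm) \<Rightarrow> 'm set \<Rightarrow> (nat \<Rightarrow> 'm) \<Rightarrow> nat \<Rightarrow> bool" where
  "minimal_generators s L g n \<longleftrightarrow> (\<forall>i<n. g i \<in> L) \<and> module.span s (g ` {..<n}) = L \<and>
     (\<forall>k h. (\<forall>i<k. h i \<in> L) \<and> module.span s (h ` {..<k}) = L \<longrightarrow> n \<le> k)"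

text \<open>First syzygy: kernel of the minimal presentation A^n -> L, e_i |-> g_i.\<close>
definition syzygy1 :: "('a::comm_ring_1 \<Rightarrow> 'm::ab_group_add \<Rightarrow> 'm) \<Rightarrow> (nat \<Rightarrow> 'm) \<Rightarrow> nat \<Rightarrow> (nat \<Rightarrow> 'a) set" where
  "syzygy1 s g n = {u \<in> free_carrier n. (\<Sum>i<n. s (u i) (g i)) = 0}"

definition sum3_scale :: "('a::comm_ring_1 \<Rightarrow> 'b \<Rightarrow> 'b) \<Rightarrow> ('a \<Rightarrow> 'c \<Rightarrow> 'c) \<Rightarrow> 'a \<Rightarrow> 'a \<times> 'b \<times> 'c \<Rightarrow> 'a \<times> 'b \<times> 'c" where
  "sum3_scale s1 s2 r p = (r * fst p, s1 r (fst (snd p)), s2 r (snd (snd p)))"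

end

(* Superficiality passes from A + M + L to the summands A and L. Together with a
   nonzerodivisor provided by depth 1 and Krull's intersection theorem, it makes x a
   nonzerodivisor on A and on L. In a one-dimensional local ring some power of m lies in every
   principal ideal generated by a nonzerodivisor, and superficiality gives m^(n+1) : x = m^n for
   large n; hence length(A/m^(n+1)) = length(A/m^n) + length(A/xA), so e_0(A) = length(A/xA),
   and the descending chain xA + m^k forces m^e_0(A) into xA. Finally M lies in m F by
   minimality of the presentation F -> L, so m^(e_0(A)-1) M lies in the intersection of M with
   m^e_0(A) F, which is contained in M \<inter> xF = xM because x is a nonzerodivisor on L = F/M. *)

theory Submission
  imports Defs "HOL-Library.Set_Algebras"
begin

section \<open>Lengths of modules\<close>

definition strict_chain ::
    "('a::comm_ring_1 \<Rightarrow> 'b::ab_group_add \<Rightarrow> 'b) \<Rightarrow> 'b set \<Rightarrow> 'b set \<Rightarrow> nat \<Rightarrow> (nat \<Rightarrow> 'b set) \<Rightarrow> bool"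
  where "strict_chain s K N n C \<longleftrightarrow> C 0 = K \<and> C n = N \<and>
           (\<forall>i\<le>n. module.subspace s (C i)) \<and> (\<forall>i<n. C i \<subset> C (Suc i))"

context module
begin

lemma module_length_eq_Sup_strict_chain:
  "module_length scale K N = Sup {enat n | n. \<exists>C. strict_chain scale K N n C}"
  unfolding module_length_def strict_chain_def by simp

lemma strict_chain_mono:
  assumes "strict_chain scale K N n C" "i \<le> j" "j \<le> n"
  shows "C i \<subseteq> C j"
  using assms(2,3)
proof (induction j rule: dec_induct)
  case (step j)
  have "C j \<subset> C (Suc j)" using assms(1) step.prems unfolding strict_chain_def by auto
  then show ?case using step.IH step.prems by auto
qed simp

lemma strict_chain_le_module_length:
  "strict_chain scale K N n C \<Longrightarrow> enat n \<le> module_length scale K N"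
  unfolding module_length_eq_Sup_strict_chain by (rule Sup_upper) auto

lemma module_length_le_enatI:
  "(\<And>n C. strict_chain scale K N n C \<Longrightarrow> n \<le> k) \<Longrightarrow> module_length scale K N \<le> enat k"
  unfolding module_length_eq_Sup_strict_chain by (rule Sup_least) auto

lemma strict_chain_exists:
  assumes "subspace P" "subspace N" "P \<subseteq> N"
  obtains n C where "strict_chain scale P N n C"
proof (cases "P = N")
  case True
  then have "strict_chain scale P N 0 (\<lambda>_. P)" using assms unfolding strict_chain_def by auto
  then show ?thesis by (rule that)
next
  case False
  then have "strict_chain scale P N 1 (\<lambda>i. if i = 0 then P else N)"
    using assms unfolding strict_chain_def by auto
  then show ?thesis by (rule that)
qed

lemma module_length_attained:
  assumes "module_length scale K N = enat k" "subspace K" "subspace N" "K \<subseteq> N"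
  obtains C where "strict_chain scale K N k C"
proof -
  let ?S = "{n. \<exists>C. strict_chain scale K N n C}"
  have "?S \<subseteq> {..k}" using strict_chain_le_module_length assms(1) by fastforce
  then have fin: "finite ?S" by (rule finite_subset) simp
  have ne: "?S \<noteq> {}" using strict_chain_exists[OF assms(2-4)] by blast
  have "module_length scale K N = Sup (enat ` ?S)"
    unfolding module_length_eq_Sup_strict_chain by (rule arg_cong[where f = Sup]) auto
  also have "\<dots> = Max (enat ` ?S)" unfolding Sup_enat_def using fin ne by auto
  also have "\<dots> \<in> enat ` ?S" using fin ne by (intro Max_in) auto
  finally show ?thesis using assms(1) that by auto
qed

lemma module_length_infinite_long_chain:
  assumes "module_length scale K N = \<infinity>"
  obtains n C where "k \<le> n" "strict_chain scale K N n C"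
proof -
  have "\<not> module_length scale K N \<le> enat k" using assms by simp
  then show ?thesis using module_length_le_enatI that by (meson nat_le_linear)
qed

lemma strict_chain_append:
  assumes "strict_chain scale K P a C1" "strict_chain scale P N b C2"
  shows "strict_chain scale K N (a + b) (\<lambda>i. if i \<le> a then C1 i else C2 (i - a))"
  unfolding strict_chain_def
proof (intro conjI allI impI)
  fix i assume i: "i < a + b"
  show "(if i \<le> a then C1 i else C2 (i - a)) \<subset> (if Suc i \<le> a then C1 (Suc i) else C2 (Suc i - a))"
  proof (cases "i < a")
    case False
    then have "i - a < b" "Suc i - a = Suc (i - a)" "C1 a = C2 0"
      using i assms unfolding strict_chain_def by auto
    then show ?thesis using assms False unfolding strict_chain_def by (cases "i = a") auto
  qed (use assms in \<open>auto simp: strict_chain_def\<close>)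
qed (use assms in \<open>auto simp: strict_chain_def\<close>)

lemma strict_chain_remdups:
  assumes "D 0 = K" "D n = N" "\<forall>i\<le>n. subspace (D i)" "\<forall>i<n. D i \<subseteq> D (Suc i)"
  obtains C where "strict_chain scale K N (card {i. i < n \<and> D i \<noteq> D (Suc i)}) C"
  using assms
proof (induction n arbitrary: N thesis)
  case 0
  then have "strict_chain scale K N 0 (\<lambda>_. K)" unfolding strict_chain_def by auto
  then show ?case using 0 by simp
next
  case (Suc n)
  let ?T = "\<lambda>n. {i. i < n \<and> D i \<noteq> D (Suc i)}"
  have T: "?T (Suc n) = (if D n = D (Suc n) then ?T n else insert n (?T n))"
    by (auto simp: less_Suc_eq)
  obtain C where C: "strict_chain scale K (D n) (card (?T n)) C"
    using Suc.IH[of "D n"] Suc.prems(2-) by auto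
  show ?case
  proof (cases "D n = D (Suc n)")
    case True
    then show ?thesis using C Suc.prems T by auto
  next
    case False
    have "strict_chain scale (D n) (D (Suc n)) 1 (\<lambda>i. if i = 0 then D n else D (Suc n))"
      using False Suc.prems unfolding strict_chain_def by auto
    from strict_chain_append[OF C this] show ?thesis using False Suc.prems T by auto
  qed
qed

lemma subspace_set_plus:
  assumes "subspace A" "subspace B"
  shows "subspace (A + B)"
proof (rule subspaceI)
  show "0 \<in> A + B" using assms subspace_0 by (metis add_0 set_plus_intro)
next
  fix x y assume "x \<in> A + B" "y \<in> A + B"
  then obtain a b a' b' where "a \<in> A" "b \<in> B" "a' \<in> A" "b' \<in> B" "x = a + b" "y = a' + b'"
    by (meson set_plus_elim)
  moreover have "a + b + (a' + b') = (a + a') + (b + b')" by (simp add: algebra_simps)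
  ultimately show "x + y \<in> A + B" using assms subspace_add by (metis set_plus_intro)
next
  fix c x assume "x \<in> A + B"
  then obtain a b where "a \<in> A" "b \<in> B" "x = a + b" by (meson set_plus_elim)
  then show "c *s x \<in> A + B" using assms subspace_scale scale_right_distrib by (metis set_plus_intro)
qed

lemma set_plus_subspace_absorb:
  assumes "subspace A" "subspace B" "A \<subseteq> B"
  shows "A + B = B" and "B + A = B"
proof -
  have "A + B \<subseteq> B" using assms subspace_add by (auto elim!: set_plus_elim)
  moreover have "B \<subseteq> A + B" using assms subspace_0 set_zero_plus2 by blast
  ultimately show "A + B = B" by auto
  then show "B + A = B" by (simp add: add.commute)
qed

lemma modular_law_eq:
  assumes "subspace A" "subspace B" "subspace P" "A \<subseteq> B"
    and "A \<inter> P = B \<inter> P" "A + P = B + P"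
  shows "A = B"
proof
  show "B \<subseteq> A"
  proof
    fix z assume z: "z \<in> B"
    then have "z \<in> A + P" using assms(3,6) subspace_0 by (metis add_0_right set_plus_intro)
    then obtain a p where ap: "a \<in> A" "p \<in> P" "z = a + p" by (meson set_plus_elim)
    then have "p \<in> B" using z assms(2,4) by (metis add_diff_cancel_left' in_mono subspace_diff)
    then have "p \<in> A" using ap assms(5) by auto
    then show "z \<in> A" using ap assms(1) subspace_add by auto
  qed
qed (use assms in auto)

text \<open>Intersecting with, and adding, a fixed submodule P splits every strict chain from K to N
  into a chain from K to P and a chain from P to N; by the modular law, every strict step
  survives in at least one of them.\<close>

lemma strict_chain_length_le_add:
  assumes sK: "subspace K" and sP: "subspace P" and sN: "subspace N"
    and KP: "K \<subseteq> P" and PN: "P \<subseteq> N"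
    and a: "module_length scale K P = enat a" and b: "module_length scale P N = enat b"
    and C: "strict_chain scale K N n C"
  shows "n \<le> a + b"
proof -
  have Csub: "\<forall>i\<le>n. subspace (C i)" and C0: "C 0 = K" and Cn: "C n = N"
    and Cstep: "\<forall>i<n. C i \<subset> C (Suc i)"
    using C unfolding strict_chain_def by auto
  let ?T1 = "{i. i < n \<and> C i \<inter> P \<noteq> C (Suc i) \<inter> P}"
  let ?T2 = "{i. i < n \<and> C i + P \<noteq> C (Suc i) + P}"
  have "C 0 \<inter> P = K" "C n \<inter> P = P" using C0 Cn KP PN by blast+
  moreover have "\<forall>i\<le>n. subspace (C i \<inter> P)" using Csub sP by (auto intro!: subspace_inter)
  moreover have "\<forall>i<n. C i \<inter> P \<subseteq> C (Suc i) \<inter> P" using Cstep by auto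
  ultimately obtain C1 where "strict_chain scale K P (card ?T1) C1"
    using strict_chain_remdups[of "\<lambda>i. C i \<inter> P" K n P] by blast
  then have T1: "card ?T1 \<le> a" using strict_chain_le_module_length a by fastforce
  have "C 0 + P = P" "C n + P = N"
    unfolding C0 Cn using set_plus_subspace_absorb sK sP sN KP PN by auto
  moreover have "\<forall>i\<le>n. subspace (C i + P)" using Csub sP by (auto intro!: subspace_set_plus)
  moreover have "\<forall>i<n. C i + P \<subseteq> C (Suc i) + P"
    using Cstep set_plus_mono2[OF psubset_imp_subset order_refl] by blast
  ultimately obtain C2 where "strict_chain scale P N (card ?T2) C2"
    using strict_chain_remdups[of "\<lambda>i. C i + P" P n N] by blast
  then have T2: "card ?T2 \<le> b" using strict_chain_le_module_length b by fastforce
  have "{..<n} \<subseteq> ?T1 \<union> ?T2"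
  proof
    fix i assume i: "i \<in> {..<n}"
    show "i \<in> ?T1 \<union> ?T2"
    proof (rule ccontr)
      assume "i \<notin> ?T1 \<union> ?T2"
      then have "C i \<inter> P = C (Suc i) \<inter> P" "C i + P = C (Suc i) + P" using i by auto
      moreover have "subspace (C i)" "subspace (C (Suc i))" "C i \<subseteq> C (Suc i)" using i Csub Cstep by auto
      ultimately have "C i = C (Suc i)" using modular_law_eq[OF _ _ sP] by blast
      then show False using Cstep i by auto
    qed
  qed
  then have "n \<le> card (?T1 \<union> ?T2)" using card_mono[of "?T1 \<union> ?T2" "{..<n}"] by simp
  also have "\<dots> \<le> card ?T1 + card ?T2" by (rule card_Un_le)
  finally show ?thesis using T1 T2 by linarith
qed

lemma module_length_infinite_if_part_infinite:
  assumes sK: "subspace K" and sP: "subspace P" and sN: "subspace N"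
    and KP: "K \<subseteq> P" and PN: "P \<subseteq> N"
    and infinite: "module_length scale K P = \<infinity> \<or> module_length scale P N = \<infinity>"
  shows "module_length scale K N = \<infinity>"
proof -
  have "enat k \<le> module_length scale K N" for k
  proof -
    obtain a C1 b C2 where ab: "k \<le> a + b"
      and C1: "strict_chain scale K P a C1" and C2: "strict_chain scale P N b C2"
    proof (cases "module_length scale K P = \<infinity>")
      case True
      obtain a C1 where "k \<le> a" "strict_chain scale K P a C1"
        using module_length_infinite_long_chain[OF True] .
      moreover obtain b C2 where "strict_chain scale P N b C2" using strict_chain_exists[OF sP sN PN] .
      ultimately show ?thesis using that[of a b] by simp
    next
      case False
      then have "module_length scale P N = \<infinity>" using infinite by argo
      then obtain b C2 where "k \<le> b" "strict_chain scale P N b C2"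
        using module_length_infinite_long_chain by blast
      moreover obtain a C1 where "strict_chain scale K P a C1" using strict_chain_exists[OF sK sP KP] .
      ultimately show ?thesis using that[of a b] by simp
    qed
    have "enat (a + b) \<le> module_length scale K N"
      by (rule strict_chain_le_module_length[OF strict_chain_append[OF C1 C2]])
    then show ?thesis using ab by (meson enat_ord_simps(1) order_trans)
  qed
  then show ?thesis
    by (cases "module_length scale K N") (metis Suc_n_not_le_n enat_ord_simps(1), simp)
qed

lemma module_length_add:
  assumes sK: "subspace K" and sP: "subspace P" and sN: "subspace N"
    and KP: "K \<subseteq> P" and PN: "P \<subseteq> N"
  shows "module_length scale K N = module_length scale K P + module_length scale P N"
proof (cases "module_length scale K P = \<infinity> \<or> module_length scale P N = \<infinity>")
  case True
  then show ?thesis using module_length_infinite_if_part_infinite[OF assms True] by auto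
next
  case False
  then obtain a b where a: "module_length scale K P = enat a" and b: "module_length scale P N = enat b"
    by auto
  obtain C1 C2 where "strict_chain scale K P a C1" "strict_chain scale P N b C2"
    using module_length_attained[OF a sK sP KP] module_length_attained[OF b sP sN PN] by metis
  then have "enat (a + b) \<le> module_length scale K N"
    using strict_chain_le_module_length[OF strict_chain_append] by blast
  moreover have "module_length scale K N \<le> enat (a + b)"
    by (rule module_length_le_enatI) (rule strict_chain_length_le_add[OF assms a b])
  ultimately show ?thesis using a b by simp
qed

lemma module_length_refl: "module_length scale K K = 0"
proof -
  have "n = 0" if C: "strict_chain scale K K n C" for n C
  proof (rule ccontr)
    assume "n \<noteq> 0"
    then have "C 0 \<subset> C 1" "C 1 \<subseteq> C n"
      using C strict_chain_mono[OF C, of 1 n] unfolding strict_chain_def by auto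
    then show False using C unfolding strict_chain_def by auto
  qed
  then have "module_length scale K K \<le> enat 0" by (intro module_length_le_enatI) simp
  then show ?thesis by (simp add: zero_enat_def[symmetric])
qed

lemma module_length_le_one:
  assumes "\<And>Q. subspace Q \<Longrightarrow> P \<subseteq> Q \<Longrightarrow> Q \<subseteq> N \<Longrightarrow> Q = P \<or> Q = N"
  shows "module_length scale P N \<le> 1"
proof -
  have "n \<le> 1" if C: "strict_chain scale P N n C" for n C
  proof (rule ccontr)
    assume "\<not> n \<le> 1"
    then have n2: "2 \<le> n" by simp
    then have "C 0 \<subset> C 1" "C 1 \<subset> C 2" "subspace (C 1)" "C 0 = P" "C n = N"
      using C unfolding strict_chain_def by (auto simp: numeral_2_eq_2)
    moreover have "C 2 \<subseteq> C n" using strict_chain_mono[OF C n2 order_refl] .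
    ultimately show False using assms[of "C 1"] by auto
  qed
  then have "module_length scale P N \<le> enat 1" by (rule module_length_le_enatI)
  then show ?thesis by (simp add: one_enat_def)
qed

lemma module_length_le_strict_mono_map:
  assumes sub: "\<And>Q. subspace Q \<Longrightarrow> K \<subseteq> Q \<Longrightarrow> Q \<subseteq> N \<Longrightarrow> subspace (f Q)"
    and strict: "\<And>Q1 Q2. subspace Q1 \<Longrightarrow> subspace Q2 \<Longrightarrow> K \<subseteq> Q1 \<Longrightarrow> Q2 \<subseteq> N \<Longrightarrow>
                   Q1 \<subset> Q2 \<Longrightarrow> f Q1 \<subset> f Q2"
    and "f K = K'" "f N = N'"
  shows "module_length scale K N \<le> module_length scale K' N'"
  unfolding module_length_eq_Sup_strict_chain[of K N]
proof (rule Sup_least)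
  fix y assume "y \<in> {enat n |n. \<exists>C. strict_chain scale K N n C}"
  then obtain n C where y: "y = enat n" and C: "strict_chain scale K N n C" by auto
  have between: "K \<subseteq> C i \<and> C i \<subseteq> N" if "i \<le> n" for i
    using strict_chain_mono[OF C, of 0 i] strict_chain_mono[OF C, of i n] that C
    unfolding strict_chain_def by auto
  have "strict_chain scale K' N' n (\<lambda>i. f (C i))"
    unfolding strict_chain_def
  proof (intro conjI allI impI)
    show "f (C 0) = K'" "f (C n) = N'" using C assms(3,4) unfolding strict_chain_def by auto
    fix i
    show "subspace (f (C i))" if "i \<le> n"
      using sub[of "C i"] between[OF that] C that unfolding strict_chain_def by auto
    show "f (C i) \<subset> f (C (Suc i))" if "i < n"
      using strict[of "C i" "C (Suc i)"] between[of i] between[of "Suc i"] C that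
      unfolding strict_chain_def by auto
  qed
  then show "y \<le> module_length scale K' N'" using y strict_chain_le_module_length by simp
qed

text \<open>Every element outside m is a unit, so every submodule strictly containing P inside
  span (insert b P) already contains b.\<close>

lemma module_length_insert_le_one:
  assumes loc: "local_ring m" and P: "subspace P" and b: "\<forall>r\<in>m. r *s b \<in> P"
  shows "module_length scale P (span (insert b P)) \<le> 1"
proof (rule module_length_le_one)
  fix Q assume Q: "subspace Q" "P \<subseteq> Q" "Q \<subseteq> span (insert b P)"
  show "Q = P \<or> Q = span (insert b P)"
  proof (cases "Q = P")
    case False
    then obtain k where k: "k \<in> Q" "k \<notin> P" using Q(2) by blast
    then obtain r where "k - r *s b \<in> span P" using Q(3) span_breakdown_eq by blast
    then have r: "k - r *s b \<in> P" using P span_eq_iff by blast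
    have "r \<notin> m"
    proof
      assume "r \<in> m"
      then have "(k - r *s b) + r *s b \<in> P" using r b P subspace_add by blast
      then show False using k by simp
    qed
    then obtain e where e: "1 = r * e" using loc unfolding local_ring_def by blast
    have "k - (k - r *s b) \<in> Q" using k(1) r Q(1,2) subspace_diff by blast
    then have "r *s b \<in> Q" by simp
    then have "e *s (r *s b) \<in> Q" using Q(1) subspace_scale by blast
    then have "b \<in> Q" using e by (simp add: mult.commute)
    then have "span (insert b P) \<subseteq> Q" using Q(1,2) span_minimal by blast
    then show ?thesis using Q(3) by blast
  qed simp
qed

lemma module_length_span_le_card:
  assumes loc: "local_ring m" and fin: "finite B" and P: "subspace P"
    and killed: "\<forall>r\<in>m. \<forall>b\<in>B. r *s b \<in> P"
  shows "module_length scale P (span (P \<union> B)) \<le> enat (card B)"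
  using fin killed
proof (induction B rule: finite_induct)
  case empty
  have "span (P \<union> {}) = P" using P by simp
  then show ?case by (simp only: module_length_refl) simp
next
  case (insert b B)
  define P' where "P' = span (P \<union> B)"
  have "span (P \<union> insert b B) = span (insert b P')"
    unfolding P'_def by (simp only: Un_insert_right span_insert span_span)
  have PP': "P \<subseteq> P'" unfolding P'_def using span_superset by blast
  have "module_length scale P (span (insert b P')) =
      module_length scale P P' + module_length scale P' (span (insert b P'))"
    using PP' span_superset[of "insert b P'"] by (intro module_length_add P) (auto simp: P'_def)
  also have "\<dots> \<le> enat (card B) + 1"
    using insert PP' module_length_insert_le_one[OF loc, of P' b] unfolding P'_def
    by (intro add_mono) auto
  finally show ?case using insert \<open>span (P \<union> insert b B) = span (insert b P')\<close>
    by (simp add: one_enat_def)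
qed

end

section \<open>Ideals, their products and powers\<close>

global_interpretation R: module "(*) :: 'a::comm_ring_1 \<Rightarrow> 'a \<Rightarrow> 'a"
  by standard (auto simp: algebra_simps)

declare R.scale_scale[simp del]

lemma ideal_iff_subspace: "ideal I \<longleftrightarrow> R.subspace I"
  by (simp add: ideal_def)

lemma ideal_0: "ideal I \<Longrightarrow> 0 \<in> I"
  by (simp add: ideal_iff_subspace R.subspace_0)

lemma ideal_add: "ideal I \<Longrightarrow> a \<in> I \<Longrightarrow> b \<in> I \<Longrightarrow> a + b \<in> I"
  by (simp add: ideal_iff_subspace R.subspace_add)

lemma ideal_mult_left: "ideal I \<Longrightarrow> a \<in> I \<Longrightarrow> r * a \<in> I"
  by (simp add: ideal_iff_subspace R.subspace_scale)

lemma ideal_mult_right: "ideal I \<Longrightarrow> a \<in> I \<Longrightarrow> a * r \<in> I"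
  using ideal_mult_left[of I a r] by (simp add: mult.commute)

lemma ideal_span: "ideal (R.span S)"
  by (simp add: ideal_iff_subspace)

lemma ideal_UNIV: "ideal UNIV"
  by (simp add: ideal_iff_subspace)

lemma ideal_eq_UNIV_iff_one_mem: "ideal I \<Longrightarrow> I = UNIV \<longleftrightarrow> 1 \<in> I"
  using ideal_mult_left[of I 1] by auto

lemma ideal_set_plus: "ideal A \<Longrightarrow> ideal B \<Longrightarrow> ideal (A + B)"
  unfolding ideal_iff_subspace by (rule R.subspace_set_plus)

lemma ideal_subset_set_plus_left: "ideal B \<Longrightarrow> A \<subseteq> A + B"
  by (metis add.commute ideal_0 set_zero_plus2)

lemma ideal_subset_set_plus_right: "ideal A \<Longrightarrow> B \<subseteq> A + B"
  by (simp add: ideal_0 set_zero_plus2)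

lemma principal_eq_dvd: "x *o UNIV = {a. x dvd a}"
  by (auto simp: elt_set_times_def dvd_def)

lemma ideal_principal: "ideal (x *o UNIV)"
  unfolding ideal_iff_subspace principal_eq_dvd by (rule R.subspaceI) auto

lemma ideal_elt_set_times: "ideal J \<Longrightarrow> ideal (x *o J)"
  unfolding ideal_iff_subspace
proof (rule R.subspaceI)
  assume J: "R.subspace J"
  show "0 \<in> x *o J" using R.subspace_0[OF J] by (metis mult_zero_right set_times_intro2)
  show "a + b \<in> x *o J" if "a \<in> x *o J" "b \<in> x *o J" for a b
    using that R.subspace_add[OF J] by (auto simp: elt_set_times_def distrib_left[symmetric])
  show "c * a \<in> x *o J" if a: "a \<in> x *o J" for a c
  proof -
    obtain b where "b \<in> J" "a = x * b" using a unfolding elt_set_times_def by blast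
    then have "c * a = x * (c * b)" "c * b \<in> J" using R.subspace_scale[OF J]
      by (auto simp: mult.left_commute)
    then show ?thesis by (simp add: set_times_intro2)
  qed
qed

definition ideal_prod :: "'a::comm_ring_1 set \<Rightarrow> 'a set \<Rightarrow> 'a set"
  where "ideal_prod I J = R.span {a * b | a b. a \<in> I \<and> b \<in> J}"

lemma ideal_ideal_prod: "ideal (ideal_prod I J)"
  by (simp add: ideal_prod_def ideal_span)

lemma ideal_prod_mem: "a \<in> I \<Longrightarrow> b \<in> J \<Longrightarrow> a * b \<in> ideal_prod I J"
  unfolding ideal_prod_def by (rule R.span_base) blast

lemma ideal_prod_least:
  "ideal K \<Longrightarrow> (\<And>a b. a \<in> I \<Longrightarrow> b \<in> J \<Longrightarrow> a * b \<in> K) \<Longrightarrow> ideal_prod I J \<subseteq> K"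
  unfolding ideal_prod_def by (intro R.span_minimal) (auto simp: ideal_iff_subspace)

lemma ideal_prod_subset_right: "ideal J \<Longrightarrow> ideal_prod I J \<subseteq> J"
  by (rule ideal_prod_least) (auto intro: ideal_mult_left)

lemma ideal_prod_mono: "I \<subseteq> I' \<Longrightarrow> J \<subseteq> J' \<Longrightarrow> ideal_prod I J \<subseteq> ideal_prod I' J'"
  unfolding ideal_prod_def by (intro R.span_mono) blast

lemma ideal_prod_assoc_subset: "ideal_prod I (ideal_prod J K) \<subseteq> ideal_prod (ideal_prod I J) K"
proof (rule ideal_prod_least[OF ideal_ideal_prod])
  fix a z assume a: "a \<in> I" and z: "z \<in> ideal_prod J K"
  let ?T = "{w. a * w \<in> ideal_prod (ideal_prod I J) K}"
  have sub: "R.subspace ?T"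
  proof (rule R.subspaceI)
    show "0 \<in> ?T" using ideal_0[OF ideal_ideal_prod] by simp
    show "u + v \<in> ?T" if "u \<in> ?T" "v \<in> ?T" for u v
      using that ideal_add[OF ideal_ideal_prod] by (simp add: distrib_left)
    show "c * u \<in> ?T" if "u \<in> ?T" for c u
      using that ideal_mult_left[OF ideal_ideal_prod, of "a * u" _ _ c]
      by (simp add: mult.left_commute)
  qed
  have gen: "b * c \<in> ?T" if "b \<in> J" "c \<in> K" for b c
    using ideal_prod_mem[OF ideal_prod_mem[OF a that(1)] that(2)] by (simp add: mult.assoc)
  have "z \<in> R.span {b * c | b c. b \<in> J \<and> c \<in> K}" using z unfolding ideal_prod_def .
  then have "z \<in> ?T" by (rule R.span_subspace_induct[OF _ sub]) (use gen in blast)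
  then show "a * z \<in> ideal_prod (ideal_prod I J) K" by simp
qed

lemma ideal_prod_principal_subset: "ideal J \<Longrightarrow> ideal_prod (x *o UNIV) J \<subseteq> x *o J"
  by (rule ideal_prod_least[OF ideal_elt_set_times])
    (auto simp: elt_set_times_def mult.assoc intro: ideal_mult_left)

lemma ideal_pow_Suc_eq_prod: "ideal_pow m (Suc n) = ideal_prod m (ideal_pow m n)"
  by (simp add: ideal_prod_def)

declare ideal_pow.simps(2)[simp del]

lemma ideal_ideal_pow: "ideal (ideal_pow m n)"
  by (cases n) (simp_all add: ideal_UNIV ideal_pow_Suc_eq_prod ideal_ideal_prod)

lemma ideal_pow_Suc_subset: "ideal_pow m (Suc n) \<subseteq> ideal_pow m n"
  unfolding ideal_pow_Suc_eq_prod by (rule ideal_prod_subset_right[OF ideal_ideal_pow])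

lemma ideal_pow_antimono: "k \<le> n \<Longrightarrow> ideal_pow m n \<subseteq> ideal_pow m k"
  by (induction n rule: dec_induct) (use ideal_pow_Suc_subset in blast)+

lemma ideal_pow_mult_mem: "a \<in> m \<Longrightarrow> b \<in> ideal_pow m n \<Longrightarrow> a * b \<in> ideal_pow m (Suc n)"
  unfolding ideal_pow_Suc_eq_prod by (rule ideal_prod_mem)

lemma power_mem_ideal_pow: "y \<in> m \<Longrightarrow> y ^ c \<in> ideal_pow m c"
  by (induction c) (auto intro: ideal_pow_mult_mem)

lemma ideal_pow_add_subset: "ideal_pow m (a + b) \<subseteq> ideal_prod (ideal_pow m a) (ideal_pow m b)"
proof (induction a)
  case 0
  have "1 * z \<in> ideal_prod (ideal_pow m 0) (ideal_pow m b)" if "z \<in> ideal_pow m b" for z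
    using that by (intro ideal_prod_mem) auto
  then show ?case by auto
next
  case (Suc a)
  have "ideal_pow m (Suc a + b) = ideal_prod m (ideal_pow m (a + b))"
    by (simp add: ideal_pow_Suc_eq_prod)
  also have "\<dots> \<subseteq> ideal_prod m (ideal_prod (ideal_pow m a) (ideal_pow m b))"
    by (rule ideal_prod_mono[OF order_refl Suc.IH])
  also have "\<dots> \<subseteq> ideal_prod (ideal_pow m (Suc a)) (ideal_pow m b)"
    unfolding ideal_pow_Suc_eq_prod by (rule ideal_prod_assoc_subset)
  finally show ?case .
qed

lemma ideal_pow_add_subset_principal:
  assumes "ideal_pow m s \<subseteq> x *o UNIV"
  shows "ideal_pow m (s + t) \<subseteq> x *o ideal_pow m t"
proof -
  have "ideal_pow m (s + t) \<subseteq> ideal_prod (ideal_pow m s) (ideal_pow m t)"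
    by (rule ideal_pow_add_subset)
  also have "\<dots> \<subseteq> ideal_prod (x *o UNIV) (ideal_pow m t)"
    by (rule ideal_prod_mono[OF assms order_refl])
  also have "\<dots> \<subseteq> x *o ideal_pow m t" by (rule ideal_prod_principal_subset[OF ideal_ideal_pow])
  finally show ?thesis .
qed

lemma ideal_pow_mult_subset_principal_power:
  assumes "ideal_pow m s \<subseteq> x *o UNIV"
  shows "ideal_pow m (s * k) \<subseteq> (x ^ k) *o UNIV"
proof (induction k)
  case (Suc k)
  have "ideal_pow m (s * Suc k) = ideal_pow m (s + s * k)" by simp
  also have "\<dots> \<subseteq> x *o ideal_pow m (s * k)" by (rule ideal_pow_add_subset_principal[OF assms])
  also have "\<dots> \<subseteq> x *o ((x ^ k) *o UNIV)" using Suc.IH by (rule set_times_mono)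
  also have "\<dots> = (x ^ Suc k) *o UNIV" by (simp add: set_times_rearrange2)
  finally show ?case .
qed simp

lemma local_ring_ideal: "local_ring m \<Longrightarrow> ideal m"
  unfolding local_ring_def by blast

lemma local_ring_mem_iff: "local_ring m \<Longrightarrow> a \<in> m \<longleftrightarrow> \<not> a dvd 1"
  by (auto simp: local_ring_def)

lemma local_ring_one_notin: "local_ring m \<Longrightarrow> 1 \<notin> m"
  by (simp add: local_ring_mem_iff)

lemma local_ring_unitE:
  assumes "local_ring m" "a \<notin> m"
  obtains e where "1 = a * e"
proof -
  have "a dvd 1" using assms by (simp add: local_ring_mem_iff)
  then show ?thesis using that by (auto elim: dvdE)
qed

lemma local_ring_proper_ideal_subset:
  assumes "local_ring m" "ideal J" "J \<noteq> UNIV"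
  shows "J \<subseteq> m"
proof
  fix j assume j: "j \<in> J"
  show "j \<in> m"
  proof (rule ccontr)
    assume "j \<notin> m"
    with assms(1) obtain u where "1 = j * u" by (rule local_ring_unitE)
    then have "1 \<in> J" using ideal_mult_right[OF assms(2) j, of u] by simp
    then show False using ideal_eq_UNIV_iff_one_mem assms(2,3) by blast
  qed
qed

lemma local_ring_prime_ideal:
  assumes "local_ring m"
  shows "prime_ideal m"
  unfolding prime_ideal_def
proof (intro conjI allI impI)
  show "ideal m" "m \<noteq> UNIV" using assms local_ring_ideal local_ring_one_notin by auto
  show "a \<in> m \<or> b \<in> m" if ab: "a * b \<in> m" for a b
  proof (rule ccontr)
    assume "\<not> (a \<in> m \<or> b \<in> m)"
    then have "a dvd 1" "b dvd 1" using local_ring_mem_iff[OF assms] by auto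
    then have "a * b dvd 1" using mult_dvd_mono[of a 1 b 1] by simp
    then show False using ab local_ring_mem_iff[OF assms] by blast
  qed
qed

lemma prime_ideal_one_notin: "prime_ideal P \<Longrightarrow> 1 \<notin> P"
  unfolding prime_ideal_def using ideal_eq_UNIV_iff_one_mem by blast

section \<open>Nonzerodivisors in one-dimensional local rings\<close>

definition nonzerodivisor :: "('a::comm_ring_1 \<Rightarrow> 'm::ab_group_add \<Rightarrow> 'm) \<Rightarrow> 'm set \<Rightarrow> 'a \<Rightarrow> bool"
  where "nonzerodivisor s N x \<longleftrightarrow> (\<forall>v\<in>N. s x v = 0 \<longrightarrow> v = 0)"

lemma (in module) nonzerodivisor_power:
  assumes "subspace N" "nonzerodivisor scale N z"
  shows "nonzerodivisor scale N (z ^ k)"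
  unfolding nonzerodivisor_def
proof (induction k)
  case (Suc k)
  show ?case
  proof (intro ballI impI)
    fix v assume v: "v \<in> N" "z ^ Suc k *s v = 0"
    then have "z ^ k *s (z *s v) = 0" by (simp add: mult.commute)
    then have "z *s v = 0" using Suc.IH subspace_scale[OF assms(1) v(1)] by blast
    then show "v = 0" using assms(2) v(1) unfolding nonzerodivisor_def by blast
  qed
qed simp

lemma ideal_Union_chain:
  assumes "C \<noteq> {}" "\<forall>J\<in>C. ideal J" "\<And>X Y. X \<in> C \<Longrightarrow> Y \<in> C \<Longrightarrow> X \<subseteq> Y \<or> Y \<subseteq> X"
  shows "ideal (\<Union>C)"
  unfolding ideal_iff_subspace
proof (rule R.subspaceI)
  show "0 \<in> \<Union>C" using assms(1,2) ideal_0 by blast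
  show "c * a \<in> \<Union>C" if "a \<in> \<Union>C" for a c using that assms(2) ideal_mult_left by blast
  show "a + b \<in> \<Union>C" if ab: "a \<in> \<Union>C" "b \<in> \<Union>C" for a b
  proof -
    obtain X Y where "X \<in> C" "a \<in> X" "Y \<in> C" "b \<in> Y" using ab by blast
    then show ?thesis using assms(2) assms(3)[of X Y] ideal_add by blast
  qed
qed

lemma maximal_ideal_avoiding_exists:
  fixes I :: "'a::comm_ring_1 set"
  assumes "ideal I" "I \<inter> S = {}"
  obtains M where "ideal M" "I \<subseteq> M" "M \<inter> S = {}"
    and "\<And>J. ideal J \<Longrightarrow> M \<subseteq> J \<Longrightarrow> J \<inter> S = {} \<Longrightarrow> J = M"
proof -
  define F where "F = {J. ideal J \<and> I \<subseteq> J \<and> J \<inter> S = {}}"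
  have "\<exists>U\<in>F. \<forall>X\<in>C. X \<subseteq> U" if C: "C \<in> chains F" for C
  proof (cases "C = {}")
    case True
    have "I \<in> F" using assms unfolding F_def by blast
    then show ?thesis using True by blast
  next
    case False
    have CF: "C \<subseteq> F" and ch: "\<And>X Y. X \<in> C \<Longrightarrow> Y \<in> C \<Longrightarrow> X \<subseteq> Y \<or> Y \<subseteq> X"
      using C unfolding chains_def chain_subset_def by auto
    have "\<forall>J\<in>C. ideal J" using CF unfolding F_def by auto
    then have "ideal (\<Union>C)" using ch False by (rule ideal_Union_chain[rotated])
    moreover have "I \<subseteq> \<Union>C" using CF False unfolding F_def by auto
    moreover have "\<Union>C \<inter> S = {}" using CF unfolding F_def by auto
    ultimately have "\<Union>C \<in> F" unfolding F_def by blast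
    then show ?thesis by blast
  qed
  then obtain M where MF: "M \<in> F" and max: "\<forall>X\<in>F. M \<subseteq> X \<longrightarrow> X = M"
    using Zorn_Lemma2[of F] by blast
  have "ideal M" "I \<subseteq> M" "M \<inter> S = {}" using MF unfolding F_def by auto
  moreover have "J = M" if "ideal J" "M \<subseteq> J" "J \<inter> S = {}" for J
    using max that \<open>I \<subseteq> M\<close> unfolding F_def by auto
  ultimately show ?thesis by (rule that)
qed

text \<open>An ideal maximal among those avoiding a multiplicative set S is prime: if a, b are
  outside M, then M + aA and M + bA meet S, and so does their product, which lies in M + abA.\<close>

lemma prime_ideal_avoiding_exists:
  fixes I :: "'a::comm_ring_1 set"
  assumes I: "ideal I" and S1: "1 \<in> S" and Smult: "\<And>a b. a \<in> S \<Longrightarrow> b \<in> S \<Longrightarrow> a * b \<in> S"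
    and disj: "I \<inter> S = {}"
  obtains P where "prime_ideal P" "I \<subseteq> P" "P \<inter> S = {}"
proof -
  obtain M where M: "ideal M" "I \<subseteq> M" "M \<inter> S = {}"
    and max: "\<And>J. ideal J \<Longrightarrow> M \<subseteq> J \<Longrightarrow> J \<inter> S = {} \<Longrightarrow> J = M"
    using maximal_ideal_avoiding_exists[OF I disj] by blast
  have meet: "\<exists>p r. p \<in> M \<and> p + a * r \<in> S" if a: "a \<notin> M" for a
  proof (rule ccontr)
    assume "\<not> ?thesis"
    then have "(M + a *o UNIV) \<inter> S = {}"
      unfolding set_plus_def elt_set_times_def by blast
    moreover have "M \<subseteq> M + a *o UNIV" using ideal_subset_set_plus_left[OF ideal_principal] .
    moreover have "a \<in> a *o UNIV" by (simp add: principal_eq_dvd)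
    then have "a \<in> M + a *o UNIV" using ideal_subset_set_plus_right[OF M(1)] by blast
    ultimately show False using max[OF ideal_set_plus[OF M(1) ideal_principal]] a by blast
  qed
  have "a \<in> M \<or> b \<in> M" if ab: "a * b \<in> M" for a b
  proof (rule ccontr)
    assume "\<not> ?thesis"
    then obtain p r q t where pq: "p \<in> M" "p + a * r \<in> S" "q \<in> M" "q + b * t \<in> S"
      using meet by blast
    have "(p + a * r) * (q + b * t) = p * (q + b * t) + q * (a * r) + (a * b) * (r * t)"
      by (simp add: algebra_simps)
    also have "\<dots> \<in> M"
      using ideal_mult_right[OF M(1) pq(1)] ideal_mult_right[OF M(1) pq(3)] ideal_mult_right[OF M(1) ab]
      by (intro ideal_add[OF M(1)])
    finally show False using Smult[OF pq(2,4)] M(3) by blast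
  qed
  moreover have "M \<noteq> UNIV" using M(3) S1 by auto
  ultimately have "prime_ideal M" using M(1) unfolding prime_ideal_def by blast
  then show ?thesis using that M by blast
qed

lemma krull_dim_ge_2:
  fixes P Q N :: "'a::comm_ring_1 set"
  assumes "prime_ideal P" "prime_ideal Q" "prime_ideal N" "P \<subset> Q" "Q \<subset> N"
  shows "enat 2 \<le> krull_dim TYPE('a)"
  unfolding krull_dim_def
proof (rule Sup_upper)
  define C where "C i = (if i = 0 then P else if i = 1 then Q else N)" for i :: nat
  have "(\<forall>i\<le>2. prime_ideal (C i)) \<and> (\<forall>i<2. C i \<subset> C (Suc i))"
    using assms unfolding C_def by (auto simp: less_2_cases_iff)
  then show "enat 2 \<in> {enat n |n. \<exists>P :: nat \<Rightarrow> 'a set.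
      (\<forall>i\<le>n. prime_ideal (P i)) \<and> (\<forall>i<n. P i \<subset> P (Suc i))}"
    by blast
qed

text \<open>A prime Q containing a nonzerodivisor z is not minimal: a prime P avoiding
  the multiplicative set of all t z^k with t outside Q lies strictly inside Q. In dimension 1
  this forces Q to be the maximal ideal.\<close>

lemma dim_one_prime_containing_nonzerodivisor_eq_maximal:
  fixes m :: "'a::comm_ring_1 set"
  assumes loc: "local_ring m" and dim: "krull_dim TYPE('a) = 1"
    and z: "nonzerodivisor (*) UNIV z" and Q: "prime_ideal Q" "z \<in> Q"
  shows "Q = m"
proof (rule ccontr)
  assume "Q \<noteq> m"
  moreover have "Q \<subseteq> m" using local_ring_proper_ideal_subset[OF loc] Q(1) unfolding prime_ideal_def by blast
  ultimately have Qm: "Q \<subset> m" by blast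
  define S where "S = {t * z ^ k | t k. t \<notin> Q}"
  have "1 = 1 * z ^ 0" by simp
  then have S1: "1 \<in> S" unfolding S_def using prime_ideal_one_notin[OF Q(1)] by blast
  have Smult: "u * w \<in> S" if uw: "u \<in> S" "w \<in> S" for u w
  proof -
    obtain t k t' k' where "u = t * z ^ k" "w = t' * z ^ k'" "t \<notin> Q" "t' \<notin> Q"
      using uw unfolding S_def by blast
    moreover have "t * t' \<notin> Q" using Q(1) \<open>t \<notin> Q\<close> \<open>t' \<notin> Q\<close> unfolding prime_ideal_def by blast
    moreover have "t * z ^ k * (t' * z ^ k') = (t * t') * z ^ (k + k')"
      by (simp add: power_add algebra_simps)
    ultimately show ?thesis unfolding S_def by blast
  qed
  have S0: "{0} \<inter> S = {}"
  proof -
    have "t * z ^ k \<noteq> 0" if "t \<notin> Q" for t k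
      using that ideal_0 Q(1) R.nonzerodivisor_power[OF _ z, of k]
      unfolding prime_ideal_def nonzerodivisor_def by (auto simp: mult.commute)
    then show ?thesis unfolding S_def by force
  qed
  have "ideal {0}" by (simp add: ideal_iff_subspace R.subspace_def)
  then obtain P where P: "prime_ideal P" "P \<inter> S = {}"
    using prime_ideal_avoiding_exists[OF _ S1 Smult S0] by blast
  have "t * z ^ 0 \<in> S" if "t \<notin> Q" for t using that unfolding S_def by blast
  then have "P \<subseteq> Q" using P(2) by auto
  moreover have "z = 1 * z ^ 1" by simp
  then have "z \<in> S" unfolding S_def using prime_ideal_one_notin[OF Q(1)] by blast
  then have "z \<notin> P" using P(2) by blast
  ultimately have "P \<subset> Q" using Q(2) by blast
  then have "enat 2 \<le> krull_dim TYPE('a)"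
    using krull_dim_ge_2[OF P(1) Q(1) local_ring_prime_ideal[OF loc] _ Qm] by blast
  then show False using dim by (simp add: one_enat_def)
qed

lemma dim_one_power_mem_principal:
  fixes m :: "'a::comm_ring_1 set"
  assumes loc: "local_ring m" and dim: "krull_dim TYPE('a) = 1"
    and z: "nonzerodivisor (*) UNIV z" and a: "a \<in> m"
  obtains k where "a ^ k \<in> z *o UNIV"
proof (rule ccontr)
  assume "\<not> thesis"
  then have "z *o UNIV \<inter> range ((^) a) = {}" using that by blast
  moreover have "u * w \<in> range ((^) a)" if uw: "u \<in> range ((^) a)" "w \<in> range ((^) a)" for u w
    using uw by (auto simp: power_add[symmetric])
  moreover have "1 \<in> range ((^) a)" by (metis power_0 rangeI)
  ultimately obtain Q where Q: "prime_ideal Q" "z *o UNIV \<subseteq> Q" "Q \<inter> range ((^) a) = {}"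
    using prime_ideal_avoiding_exists[OF ideal_principal, of "range ((^) a)" z] by blast
  have "z \<in> Q" using Q(2) by (auto simp: principal_eq_dvd)
  then have "Q = m" by (rule dim_one_prime_containing_nonzerodivisor_eq_maximal[OF loc dim z Q(1)])
  moreover have "a ^ 1 \<in> range ((^) a)" by blast
  ultimately show False using Q(3) a by auto
qed

lemma span_insert_mult_mem:
  fixes a :: "'a::comm_ring_1"
  assumes i: "i \<in> R.span (insert a B)"
    and w1: "w \<in> ideal_pow (R.span B) p + (a ^ Suc k) *o UNIV"
    and w2: "w \<in> ideal_pow (R.span B) (Suc p) + (a ^ k) *o UNIV"
  shows "i * w \<in> ideal_pow (R.span B) (Suc p) + (a ^ Suc k) *o UNIV"
proof -
  let ?T = "ideal_pow (R.span B) (Suc p) + (a ^ Suc k) *o UNIV"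
  obtain c where j: "i - c * a \<in> R.span B" using i R.span_breakdown_eq by blast
  obtain u v where uv: "u \<in> ideal_pow (R.span B) p" "v \<in> (a ^ Suc k) *o UNIV" "w = u + v"
    using w1 by (auto elim: set_plus_elim)
  have "(i - c * a) * w \<in> ?T"
    using ideal_pow_mult_mem[OF j uv(1)] ideal_mult_left[OF ideal_principal uv(2)]
    unfolding uv(3) distrib_left by (rule set_plus_intro)
  moreover obtain u' v' where uv': "u' \<in> ideal_pow (R.span B) (Suc p)" "v' \<in> (a ^ k) *o UNIV" "w = u' + v'"
    using w2 by (auto elim: set_plus_elim)
  have "c * a * v' \<in> (a ^ Suc k) *o UNIV"
    using uv'(2) by (auto simp: principal_eq_dvd intro: mult_dvd_mono)
  then have "c * a * w \<in> ?T"
    using ideal_mult_left[OF ideal_ideal_pow uv'(1)] unfolding uv'(3) distrib_left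
    by (rule set_plus_intro[rotated])
  ultimately have "(i - c * a) * w + c * a * w \<in> ?T"
    using ideal_add[OF ideal_set_plus[OF ideal_ideal_pow ideal_principal]] by blast
  then show ?thesis by (simp add: algebra_simps)
qed

lemma ideal_pow_span_insert_subset:
  fixes a :: "'a::comm_ring_1"
  shows "ideal_pow (R.span (insert a B)) (p + k) \<subseteq> ideal_pow (R.span B) p + (a ^ k) *o UNIV"
proof (induction p arbitrary: k)
  case 0
  have "UNIV \<subseteq> UNIV + (a ^ k) *o UNIV" by (rule ideal_subset_set_plus_left[OF ideal_principal])
  then show ?case by auto
next
  case (Suc p)
  note outer_IH = Suc.IH
  show ?case
  proof (induction k)
    case 0
    have "UNIV \<subseteq> ideal_pow (R.span B) (Suc p) + UNIV"
      by (rule ideal_subset_set_plus_right[OF ideal_ideal_pow])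
    then show ?case by (auto simp: principal_eq_dvd)
  next
    case (Suc k)
    have "ideal_pow (R.span (insert a B)) (Suc p + Suc k)
        = ideal_prod (R.span (insert a B)) (ideal_pow (R.span (insert a B)) (Suc p + k))"
      by (simp add: ideal_pow_Suc_eq_prod[symmetric])
    also have "\<dots> \<subseteq> ideal_pow (R.span B) (Suc p) + (a ^ Suc k) *o UNIV"
      using Suc.IH outer_IH[of "Suc k"]
      by (intro ideal_prod_least ideal_set_plus ideal_ideal_pow ideal_principal span_insert_mult_mem)
        auto
    finally show ?case .
  qed
qed

lemma ideal_pow_span_subset:
  fixes X :: "'a::comm_ring_1 set"
  assumes X: "ideal X" and fin: "finite B" and rad: "\<forall>b\<in>B. \<exists>k. b ^ k \<in> X"
  obtains N where "ideal_pow (R.span B) N \<subseteq> X"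
  using fin rad that
proof (induction B arbitrary: thesis rule: finite_induct)
  case empty
  have "ideal_pow (R.span {}) 1 \<subseteq> X"
    unfolding One_nat_def ideal_pow_Suc_eq_prod R.span_empty
    by (rule ideal_prod_least[OF X]) (use ideal_0[OF X] in auto)
  then show ?case using empty by blast
next
  case (insert a B)
  obtain p where p: "ideal_pow (R.span B) p \<subseteq> X" using insert by auto
  obtain k where k: "a ^ k \<in> X" using insert by auto
  have "ideal_pow (R.span B) p + (a ^ k) *o UNIV \<subseteq> X"
    using p ideal_add[OF X] ideal_mult_left[OF X k]
    by (auto elim!: set_plus_elim simp: elt_set_times_def mult.commute)
  then show ?case using ideal_pow_span_insert_subset[of a B p k] insert.prems by blast
qed

lemma dim_one_ideal_pow_subset_principal:
  fixes m :: "'a::comm_ring_1 set"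
  assumes loc: "local_ring m" and noeth: "noetherian_ring TYPE('a)"
    and dim: "krull_dim TYPE('a) = 1" and z: "nonzerodivisor (*) UNIV z"
  obtains s where "ideal_pow m s \<subseteq> z *o UNIV"
proof -
  obtain B where B: "finite B" "R.span B = m"
    using noeth local_ring_ideal[OF loc] unfolding noetherian_ring_def by blast
  have "\<forall>b\<in>B. \<exists>k. b ^ k \<in> z *o UNIV"
    using B R.span_superset dim_one_power_mem_principal[OF loc dim z] by blast
  then show ?thesis using ideal_pow_span_subset[OF ideal_principal B(1)] B(2) that by blast
qed

section \<open>Noetherian modules and the Krull intersection theorem\<close>

context module
begin

lemma subspace_scale_image:
  assumes "subspace L"
  shows "subspace ((\<lambda>v. c *s v) ` L)"
proof -
  interpret hom: module_hom scale scale "\<lambda>v. c *s v"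
    by unfold_locales (simp_all add: scale_right_distrib mult.commute)
  show ?thesis using assms by (rule hom.subspace_image)
qed

lemma ideal_insert_coefficients:
  assumes N: "subspace N"
  shows "ideal {c. \<exists>u\<in>span G. u + c *s g \<in> N}"
  unfolding ideal_iff_subspace
proof (rule R.subspaceI)
  show "0 \<in> {c. \<exists>u\<in>span G. u + c *s g \<in> N}" using span_zero subspace_0[OF N] by force
  show "c1 + c2 \<in> {c. \<exists>u\<in>span G. u + c *s g \<in> N}"
    if c: "c1 \<in> {c. \<exists>u\<in>span G. u + c *s g \<in> N}" "c2 \<in> {c. \<exists>u\<in>span G. u + c *s g \<in> N}" for c1 c2
  proof -
    obtain u1 u2 where u: "u1 \<in> span G" "u1 + c1 *s g \<in> N" "u2 \<in> span G" "u2 + c2 *s g \<in> N"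
      using c by blast
    then have "(u1 + u2) + (c1 + c2) *s g \<in> N"
      using subspace_add[OF N u(2) u(4)] by (simp add: scale_left_distrib algebra_simps)
    then show ?thesis using span_add[OF u(1) u(3)] by blast
  qed
  show "d * c \<in> {c. \<exists>u\<in>span G. u + c *s g \<in> N}" if c: "c \<in> {c. \<exists>u\<in>span G. u + c *s g \<in> N}" for c d
  proof -
    obtain u where u: "u \<in> span G" "u + c *s g \<in> N" using c by blast
    then have "d *s u + (d * c) *s g \<in> N"
      using subspace_scale[OF N u(2), of d] by (simp add: scale_right_distrib)
    then show ?thesis using span_scale[OF u(1)] by blast
  qed
qed

text \<open>Write v = u + c g with u in span G; c is a combination of the elements of F, and
  subtracting the same combination of the elements ua a + a g of N leaves an element of
  N \<inter> span G.\<close>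

lemma submodule_subset_span_insert:
  assumes N: "subspace N" "N \<subseteq> span (insert g G)"
    and F: "finite F" "R.span F = {c. \<exists>u\<in>span G. u + c *s g \<in> N}"
    and ua: "\<And>a. a \<in> F \<Longrightarrow> ua a \<in> span G \<and> ua a + a *s g \<in> N"
  shows "N \<subseteq> span ((N \<inter> span G) \<union> (\<lambda>a. ua a + a *s g) ` F)"
proof
  let ?B = "(N \<inter> span G) \<union> (\<lambda>a. ua a + a *s g) ` F"
  fix v assume v: "v \<in> N"
  obtain c where c: "v - c *s g \<in> span G" using v N(2) span_breakdown_eq by blast
  have "c \<in> R.span F" unfolding F(2) using c v by (intro CollectI bexI[of _ "v - c *s g"]) auto
  then obtain r where r: "c = (\<Sum>a\<in>F. r a * a)" using R.span_finite[OF F(1)] by auto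
  define w where "w = (\<Sum>a\<in>F. r a *s (ua a + a *s g))"
  have "w = (\<Sum>a\<in>F. r a *s ua a) + c *s g"
    unfolding w_def r scale_sum_left by (simp add: scale_right_distrib sum.distrib)
  then have vw: "v - w = (v - c *s g) - (\<Sum>a\<in>F. r a *s ua a)" by simp
  have "(\<Sum>a\<in>F. r a *s ua a) \<in> span G" using ua by (intro span_sum span_scale) auto
  then have "v - w \<in> span G" unfolding vw by (rule span_diff[OF c])
  moreover have "w \<in> N" using ua N(1) unfolding w_def by (intro subspace_sum subspace_scale) auto
  then have "v - w \<in> N" using v N(1) subspace_diff by blast
  ultimately have "v - w \<in> span ?B" by (intro span_base) blast
  moreover have "w \<in> span ?B" unfolding w_def by (intro span_sum span_scale span_base) auto
  ultimately have "(v - w) + w \<in> span ?B" by (rule span_add)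
  then show "v \<in> span ?B" by simp
qed

text \<open>Induction on the generators of the ambient module: the part of N inside the span of
  the remaining generators is finitely generated by induction, and the coefficients of the new
  generator g in elements of N form an ideal, which is finitely generated.\<close>

lemma noetherian_submodule_finitely_generated:
  assumes noeth: "noetherian_ring TYPE('a)" and fin: "finite G"
    and N: "subspace N" "N \<subseteq> span G"
  obtains B where "finite B" "B \<subseteq> N" "span B = N"
proof -
  have "\<exists>B. finite B \<and> B \<subseteq> N \<and> span B = N"
    using fin N
  proof (induction G arbitrary: N rule: finite_induct)
    case empty
    then have "N = {0}" using subspace_0 by auto
    then show ?case by (intro exI[of _ "{}"]) auto
  next
    case (insert g G)
    define I where "I = {c. \<exists>u\<in>span G. u + c *s g \<in> N}"
    have "ideal I" unfolding I_def by (rule ideal_insert_coefficients[OF insert.prems(1)])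
    then obtain F where F: "finite F" "R.span F = I" using noeth unfolding noetherian_ring_def by blast
    then have "\<forall>a\<in>F. \<exists>u. u \<in> span G \<and> u + a *s g \<in> N"
      using R.span_superset[of F] unfolding I_def by blast
    then obtain ua where ua: "\<And>a. a \<in> F \<Longrightarrow> ua a \<in> span G \<and> ua a + a *s g \<in> N" by metis
    obtain B' where B': "finite B'" "B' \<subseteq> N \<inter> span G" "span B' = N \<inter> span G"
      using insert.IH[of "N \<inter> span G"] insert.prems(1) by (auto intro: subspace_inter)
    define B where "B = B' \<union> (\<lambda>a. ua a + a *s g) ` F"
    have BN: "B \<subseteq> N" unfolding B_def using B'(2) ua by auto
    have "(N \<inter> span G) \<union> (\<lambda>a. ua a + a *s g) ` F \<subseteq> span B"
      using B'(3) span_mono[of B' B] span_superset[of B] unfolding B_def by blast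
    then have "N \<subseteq> span B"
      using submodule_subset_span_insert[OF insert.prems F[unfolded I_def] ua] span_minimal
      by (metis subspace_span subset_trans)
    then have "span B = N" using span_minimal[OF BN insert.prems(1)] by blast
    moreover have "finite B" unfolding B_def using B'(1) F(1) by simp
    ultimately show ?case using BN by blast
  qed
  then show ?thesis using that by blast
qed

lemma noetherian_ascending_chain_stabilizes:
  assumes noeth: "noetherian_ring TYPE('a)" and fin: "finite G"
    and sub: "\<And>j. subspace (K j)" and inG: "\<And>j. K j \<subseteq> span G" and inc: "\<And>j. K j \<subseteq> K (Suc j)"
  obtains t where "\<And>j. t \<le> j \<Longrightarrow> K j = K t"
proof -
  have mono: "K i \<subseteq> K j" if "i \<le> j" for i j
    using that by (induction j rule: dec_induct) (use inc in blast)+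
  have U: "subspace (\<Union>j. K j)"
  proof (rule subspaceI)
    show "0 \<in> (\<Union>j. K j)" using subspace_0[OF sub[of 0]] by blast
    show "a + b \<in> (\<Union>j. K j)" if ab: "a \<in> (\<Union>j. K j)" "b \<in> (\<Union>j. K j)" for a b
    proof -
      obtain i j where "a \<in> K i" "b \<in> K j" using ab by blast
      then have "a \<in> K (max i j)" "b \<in> K (max i j)" using mono[of i "max i j"] mono[of j "max i j"] by auto
      then show ?thesis using subspace_add[OF sub] by blast
    qed
    show "c *s a \<in> (\<Union>j. K j)" if "a \<in> (\<Union>j. K j)" for a c
      using that subspace_scale[OF sub] by blast
  qed
  moreover have "(\<Union>j. K j) \<subseteq> span G" using inG by blast
  ultimately obtain B where B: "finite B" "B \<subseteq> (\<Union>j. K j)" "span B = (\<Union>j. K j)"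
    by (rule noetherian_submodule_finitely_generated[OF noeth fin])
  then have "\<forall>b\<in>B. \<exists>j. b \<in> K j" by blast
  then obtain idx where idx: "\<And>b. b \<in> B \<Longrightarrow> b \<in> K (idx b)" by metis
  define t where "t = Max (insert 0 (idx ` B))"
  have "B \<subseteq> K t"
  proof
    fix b assume "b \<in> B"
    then have "idx b \<le> t" unfolding t_def using B(1) by (intro Max_ge) auto
    then show "b \<in> K t" using mono idx \<open>b \<in> B\<close> by blast
  qed
  then have "(\<Union>j. K j) \<subseteq> K t" using B(3) span_minimal[OF _ sub] by metis
  then have "K j = K t" if "t \<le> j" for j using mono[OF that] by blast
  then show ?thesis by (rule that)
qed

lemma nakayama_span:
  assumes loc: "local_ring m" and z: "z \<in> m" and fin: "finite B"
    and "span B \<subseteq> (\<lambda>v. z *s v) ` span B"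
  shows "span B = {0}"
  using fin assms(4)
proof (induction B rule: finite_induct)
  case (insert b B)
  obtain w where w: "w \<in> span (insert b B)" "b = z *s w"
    using insert.prems span_base[of b "insert b B"] by blast
  then obtain c where c: "w - c *s b \<in> span B" using span_breakdown_eq by blast
  define u where "u = w - c *s b"
  have "z *s u = z *s w - z *s (c *s b)" unfolding u_def by (rule scale_right_diff_distrib)
  also have "\<dots> = b - (z * c) *s b" by (simp only: scale_scale w(2)[symmetric])
  finally have eq: "(1 - z * c) *s b = z *s u" by (simp add: scale_left_diff_distrib)
  have "z * c \<in> m" using ideal_mult_right[OF local_ring_ideal[OF loc] z] .
  then have "1 - z * c \<notin> m"
    using ideal_add[OF local_ring_ideal[OF loc]] local_ring_one_notin[OF loc] by force
  with loc obtain e where e: "1 = (1 - z * c) * e" by (rule local_ring_unitE)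
  have "b = e *s ((1 - z * c) *s b)" using e by (simp add: mult.commute)
  also have "\<dots> = (e * z) *s u" unfolding eq by simp
  finally have "b \<in> span B" using c span_scale unfolding u_def by metis
  then have "span (insert b B) = span B"
    using span_mono[of B "insert b B"] span_minimal[of "insert b B" "span B"] span_superset[of B]
    by auto
  then show ?case using insert.IH insert.prems by simp
qed simp

lemma subspace_scale_kernel:
  assumes "subspace L"
  shows "subspace {v \<in> L. c *s v = 0}"
proof (rule subspaceI)
  show "0 \<in> {v \<in> L. c *s v = 0}" using subspace_0[OF assms] by simp
  show "v + w \<in> {v \<in> L. c *s v = 0}" if "v \<in> {v \<in> L. c *s v = 0}" "w \<in> {v \<in> L. c *s v = 0}" for v w
    using that subspace_add[OF assms] by (simp add: scale_right_distrib)
  show "d *s v \<in> {v \<in> L. c *s v = 0}" if "v \<in> {v \<in> L. c *s v = 0}" for d v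
    using that subspace_scale[OF assms] scale_left_commute[of c d v] by simp
qed

text \<open>The annihilators of the powers z^j stabilize, say from t on. Writing an element w of
  the intersection N both as z^(t+1) u and as z^(j+t+1) u_j shows that z^t u lies in
  z^j (span G) for every j, i.e. in N, and w = z (z^t u).\<close>

lemma Inter_scale_powers_subset_scale:
  fixes z :: 'a
  assumes noeth: "noetherian_ring TYPE('a)" and fin: "finite G"
  defines "N \<equiv> \<Inter>k. (\<lambda>v. z ^ k *s v) ` span G"
  shows "N \<subseteq> (\<lambda>v. z *s v) ` N"
proof
  define K where "K j = {v \<in> span G. z ^ j *s v = 0}" for j
  have "K j \<subseteq> K (Suc j)" for j unfolding K_def by (auto simp flip: scale_scale)
  then obtain t where t: "\<And>j. t \<le> j \<Longrightarrow> K j = K t"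
    using noetherian_ascending_chain_stabilizes[OF noeth fin, of K]
      subspace_scale_kernel[of "span G"] unfolding K_def by auto
  fix w assume w: "w \<in> N"
  then obtain u where u: "u \<in> span G" "w = z ^ Suc t *s u" unfolding N_def by blast
  have "z ^ t *s u \<in> (\<lambda>v. z ^ j *s v) ` span G" for j
  proof -
    obtain uj where uj: "uj \<in> span G" "w = z ^ (j + Suc t) *s uj" using w unfolding N_def by blast
    have "z ^ Suc t *s (u - z ^ j *s uj) = w - z ^ (j + Suc t) *s uj"
      unfolding u(2) by (simp add: scale_right_diff_distrib power_add mult_ac)
    then have "u - z ^ j *s uj \<in> K (Suc t)"
      using u(1) uj unfolding K_def by (simp add: span_diff span_scale)
    then have "u - z ^ j *s uj \<in> K t" using t[of "Suc t"] by simp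
    then have "z ^ t *s u = z ^ j *s (z ^ t *s uj)"
      unfolding K_def by (simp add: scale_right_diff_distrib power_add mult_ac)
    then show ?thesis using span_scale[OF uj(1)] by blast
  qed
  then have "z ^ t *s u \<in> N" unfolding N_def by blast
  moreover have "w = z *s (z ^ t *s u)" using u(2) by simp
  ultimately show "w \<in> (\<lambda>v. z *s v) ` N" by blast
qed

lemma krull_intersection:
  assumes noeth: "noetherian_ring TYPE('a)" and loc: "local_ring m" and z: "z \<in> m"
    and fin: "finite G"
  shows "(\<Inter>k. (\<lambda>v. z ^ k *s v) ` span G) = {0}"
proof -
  let ?N = "\<Inter>k. (\<lambda>v. z ^ k *s v) ` span G"
  have "subspace ?N" by (intro subspace_Int subspace_scale_image subspace_span)
  moreover have "?N \<subseteq> (\<lambda>v. z ^ 0 *s v) ` span G" by blast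
  then have "?N \<subseteq> span G" by simp
  ultimately obtain B where B: "finite B" "B \<subseteq> ?N" "span B = ?N"
    by (rule noetherian_submodule_finitely_generated[OF noeth fin])
  have "span B = {0}"
    using Inter_scale_powers_subset_scale[OF noeth fin] B(3) by (intro nakayama_span[OF loc z B(1)]) simp
  then show ?thesis using B(3) by simp
qed

end

section \<open>The multiplicity of a one-dimensional local ring\<close>

lemma ideal_smult_ring_UNIV: "ideal I \<Longrightarrow> ideal_smult (*) I UNIV = I"
proof -
  assume I: "ideal I"
  have "{r * v | r v. r \<in> I \<and> v \<in> UNIV} = I"
  proof
    show "{r * v | r v. r \<in> I \<and> v \<in> UNIV} \<subseteq> I" using ideal_mult_right[OF I] by blast
    show "I \<subseteq> {r * v | r v. r \<in> I \<and> v \<in> UNIV}"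
    proof
      fix a assume "a \<in> I"
      then have "a = a * 1 \<and> a \<in> I \<and> (1::'a) \<in> UNIV" by simp
      then show "a \<in> {r * v | r v. r \<in> I \<and> v \<in> UNIV}" by blast
    qed
  qed
  then show ?thesis using I by (simp add: ideal_smult_def ideal_iff_subspace)
qed

lemma superficial_ring_iff:
  "superficial (*) m UNIV x \<longleftrightarrow> x \<in> m \<and>
     (\<exists>c>0. \<forall>n>c. {a. x * a \<in> ideal_pow m n} \<inter> ideal_pow m c = ideal_pow m (n - 1))"
  by (simp add: superficial_def ideal_smult_ring_UNIV[OF ideal_ideal_pow])

lemma module_length_ideal_pow_finite:
  fixes m :: "'a::comm_ring_1 set"
  assumes loc: "local_ring m" and noeth: "noetherian_ring TYPE('a)"
  shows "module_length (*) (ideal_pow m k) UNIV \<noteq> \<infinity>"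
proof (induction k)
  case 0
  show ?case by (simp add: R.module_length_refl)
next
  case (Suc k)
  obtain B where B: "finite B" "R.span B = ideal_pow m k"
    using noeth ideal_ideal_pow unfolding noetherian_ring_def by blast
  have Bk: "B \<subseteq> ideal_pow m k" using B(2) R.span_superset by blast
  have span: "R.span (ideal_pow m (Suc k) \<union> B) = ideal_pow m k"
  proof
    show "R.span (ideal_pow m (Suc k) \<union> B) \<subseteq> ideal_pow m k"
      using ideal_pow_Suc_subset Bk ideal_ideal_pow[of m k]
      by (intro R.span_minimal) (auto simp: ideal_iff_subspace)
    show "ideal_pow m k \<subseteq> R.span (ideal_pow m (Suc k) \<union> B)"
      using B(2) R.span_mono[of B "ideal_pow m (Suc k) \<union> B"] by blast
  qed
  have "\<forall>r\<in>m. \<forall>b\<in>B. r * b \<in> ideal_pow m (Suc k)" using Bk ideal_pow_mult_mem by blast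
  then have "module_length (*) (ideal_pow m (Suc k)) (R.span (ideal_pow m (Suc k) \<union> B)) \<le> enat (card B)"
    using ideal_ideal_pow[of m "Suc k"] unfolding ideal_iff_subspace
    by (intro R.module_length_span_le_card[OF loc B(1)])
  then have "module_length (*) (ideal_pow m (Suc k)) (ideal_pow m k) \<le> enat (card B)"
    unfolding span .
  then obtain d where d: "module_length (*) (ideal_pow m (Suc k)) (ideal_pow m k) = enat d"
    using enat_ile by blast
  have sum: "module_length (*) (ideal_pow m (Suc k)) UNIV =
      module_length (*) (ideal_pow m (Suc k)) (ideal_pow m k) + module_length (*) (ideal_pow m k) UNIV"
    using ideal_ideal_pow[of m "Suc k"] ideal_ideal_pow[of m k] ideal_pow_Suc_subset[of m k]
    by (intro R.module_length_add) (auto simp: ideal_iff_subspace)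
  show ?case using Suc.IH by (simp add: sum d plus_eq_infty_iff_enat)
qed

lemma nonzerodivisor_preimage_elt_set_times:
  assumes x: "nonzerodivisor (*) UNIV x"
  shows "{a. x * a \<in> x *o Q} = Q"
proof -
  have "x * a = x * b \<longleftrightarrow> a = b" for a b
  proof
    assume "x * a = x * b"
    then have "x * (a - b) = 0" by (simp add: right_diff_distrib)
    then have "a - b = 0" using x unfolding nonzerodivisor_def by blast
    then show "a = b" by simp
  qed simp
  then show ?thesis by (auto simp: elt_set_times_def)
qed

lemma ideal_preimage_mult: "ideal Q \<Longrightarrow> ideal {a. x * a \<in> Q}"
  unfolding ideal_iff_subspace
proof (rule R.subspaceI)
  assume Q: "R.subspace Q"
  show "0 \<in> {a. x * a \<in> Q}" using R.subspace_0[OF Q] by simp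
  show "a + b \<in> {a. x * a \<in> Q}" if "a \<in> {a. x * a \<in> Q}" "b \<in> {a. x * a \<in> Q}" for a b
    using that R.subspace_add[OF Q] by (simp add: distrib_left)
  show "c * a \<in> {a. x * a \<in> Q}" if "a \<in> {a. x * a \<in> Q}" for c a
    using that R.subspace_scale[OF Q, of "x * a" c] by (simp add: mult.left_commute)
qed

text \<open>Multiplication by a nonzerodivisor is an isomorphism onto its image, so it preserves
  lengths; on submodules of x J' its inverse is the preimage under multiplication by x.\<close>

lemma module_length_mult_nonzerodivisor:
  assumes x: "nonzerodivisor (*) UNIV x"
  shows "module_length (*) (x *o J) (x *o J') = module_length (*) J J'"
proof (rule antisym)
  note preimage = nonzerodivisor_preimage_elt_set_times[OF x]
  show "module_length (*) J J' \<le> module_length (*) (x *o J) (x *o J')"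
  proof (rule R.module_length_le_strict_mono_map[where f = "\<lambda>Q. x *o Q"])
    show "R.subspace (x *o Q)" if "R.subspace Q" for Q
      using that ideal_elt_set_times by (simp add: ideal_iff_subspace)
    show "x *o Q1 \<subset> x *o Q2" if "Q1 \<subset> Q2" for Q1 Q2
    proof
      show "x *o Q1 \<subseteq> x *o Q2" using that by (intro set_times_mono) auto
      show "x *o Q1 \<noteq> x *o Q2"
      proof
        assume "x *o Q1 = x *o Q2"
        then have "Q1 = Q2" using preimage by metis
        then show False using that by blast
      qed
    qed
  qed (rule refl)+
  show "module_length (*) (x *o J) (x *o J') \<le> module_length (*) J J'"
  proof (rule R.module_length_le_strict_mono_map[where f = "\<lambda>Q. {a. x * a \<in> Q}"])
    show "R.subspace {a. x * a \<in> Q}" if "R.subspace Q" for Q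
      using that ideal_preimage_mult by (simp add: ideal_iff_subspace)
    show "{a. x * a \<in> Q1} \<subset> {a. x * a \<in> Q2}" if "Q2 \<subseteq> x *o J'" "Q1 \<subset> Q2" for Q1 Q2
      using that by (auto simp: elt_set_times_def)
  qed (rule preimage)+
qed

lemma colon_ideal_pow_eq:
  assumes x: "x \<in> m" and reg: "nonzerodivisor (*) UNIV x"
    and s: "ideal_pow m s \<subseteq> x *o UNIV"
    and sup: "\<forall>n>c. {a. x * a \<in> ideal_pow m n} \<inter> ideal_pow m c = ideal_pow m (n - 1)"
    and n: "s + c \<le> n"
  shows "{a. x * a \<in> ideal_pow m (Suc n)} = ideal_pow m n"
proof
  show "ideal_pow m n \<subseteq> {a. x * a \<in> ideal_pow m (Suc n)}" using ideal_pow_mult_mem[OF x] by blast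
  show "{a. x * a \<in> ideal_pow m (Suc n)} \<subseteq> ideal_pow m n"
  proof
    fix a assume xa: "a \<in> {a. x * a \<in> ideal_pow m (Suc n)}"
    have "ideal_pow m (Suc n) = ideal_pow m (s + (Suc n - s))" using n by simp
    also have "\<dots> \<subseteq> x *o ideal_pow m (Suc n - s)" by (rule ideal_pow_add_subset_principal[OF s])
    finally have "x * a \<in> x *o ideal_pow m (Suc n - s)" using xa by (simp add: subset_iff)
    then have "a \<in> ideal_pow m (Suc n - s)"
      using nonzerodivisor_preimage_elt_set_times[OF reg] by blast
    moreover have "c \<le> Suc n - s" using n by simp
    ultimately have "a \<in> ideal_pow m c" using ideal_pow_antimono[of c "Suc n - s" m] by blast
    moreover have "c < Suc n" using n by simp
    ultimately have "a \<in> {a. x * a \<in> ideal_pow m (Suc n)} \<inter> ideal_pow m c" using xa by blast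
    then show "a \<in> ideal_pow m n" using sup \<open>c < Suc n\<close> by auto
  qed
qed

lemma LIMSEQ_div_of_eventually_arithmetic:
  fixes f :: "nat \<Rightarrow> nat"
  assumes step: "\<And>n. n0 \<le> n \<Longrightarrow> f (Suc n) = f n + l"
  shows "(\<lambda>n. real (f n) / real n) \<longlonglongrightarrow> real l"
proof -
  define B where "B = real (f n0) - real n0 * real l"
  have lin: "f n = f n0 + (n - n0) * l" if "n0 \<le> n" for n
    using that by (induction n rule: dec_induct) (auto simp: step Suc_diff_le)
  have "\<forall>\<^sub>F n in sequentially. B / real n + real l = real (f n) / real n"
    unfolding eventually_sequentially
  proof (intro exI allI impI)
    fix n assume n: "Suc n0 \<le> n"
    then have "real (f n) = real (f n0) + (real n - real n0) * real l" using lin[of n] by (simp add: of_nat_diff)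
    then show "B / real n + real l = real (f n) / real n"
      using n unfolding B_def by (simp add: field_simps)
  qed
  moreover have "(\<lambda>n. B / real n + real l) \<longlonglongrightarrow> 0 + real l"
    by (intro tendsto_add lim_const_over_n tendsto_const)
  ultimately show ?thesis using tendsto_cong by force
qed

lemma multiplicity_dim_one_eq:
  fixes m :: "'a::comm_ring_1 set"
  assumes dim: "krull_dim TYPE('a) = 1"
    and fin: "\<And>n. module_length (*) (ideal_pow m n) UNIV = enat (f n)"
    and step: "\<And>n. n0 \<le> n \<Longrightarrow> f (Suc n) = f n + l"
  shows "multiplicity m = l"
proof -
  have "the_enat (krull_dim TYPE('a)) = 1" using dim by (simp add: one_enat_def)
  then have seq: "(\<lambda>n. fact (the_enat (krull_dim TYPE('a)))
       * real (the_enat (module_length (*) (ideal_pow m n) UNIV))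
       / real n ^ the_enat (krull_dim TYPE('a))) = (\<lambda>n. real (f n) / real n)"
    by (simp add: fin)
  show ?thesis
    unfolding multiplicity_def seq
  proof (rule the_equality)
    show lim: "(\<lambda>n. real (f n) / real n) \<longlonglongrightarrow> real l"
      by (rule LIMSEQ_div_of_eventually_arithmetic[of n0 f l]) (rule step)
    show "e = l" if "(\<lambda>n. real (f n) / real n) \<longlonglongrightarrow> real e" for e
      using LIMSEQ_unique[OF that lim] by simp
  qed
qed

lemma ideal_set_plus_subset: "ideal I \<Longrightarrow> A \<subseteq> I \<Longrightarrow> B \<subseteq> I \<Longrightarrow> A + B \<subseteq> I"
  by (auto elim!: set_plus_elim intro!: ideal_add)

lemma ideal_pow_Suc_subset_principal_plus:
  assumes "ideal_pow m j \<subseteq> x *o UNIV + ideal_pow m (Suc j)"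
  shows "ideal_pow m (Suc j) \<subseteq> x *o UNIV + ideal_pow m (Suc (Suc j))"
  unfolding ideal_pow_Suc_eq_prod[of m j]
proof (rule ideal_prod_least[OF ideal_set_plus[OF ideal_principal ideal_ideal_pow]])
  fix a b assume a: "a \<in> m" and "b \<in> ideal_pow m j"
  then obtain t b' where tb: "b' \<in> ideal_pow m (Suc j)" "b = x * t + b'"
    using assms by (auto elim!: set_plus_elim simp: elt_set_times_def)
  have "a * b = x * (a * t) + a * b'" unfolding tb(2) by (simp add: algebra_simps)
  moreover have "x * (a * t) \<in> x *o UNIV" by (simp add: set_times_intro2)
  ultimately show "a * b \<in> x *o UNIV + ideal_pow m (Suc (Suc j))"
    using ideal_pow_mult_mem[OF a tb(1)] by (simp add: set_plus_intro)
qed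

text \<open>A Nakayama-type argument: once m^k \<subseteq> xA + m^(k+1), iterating gives
  m^k \<subseteq> xA + m^(k+j) for all j, and m^(k+s) \<subseteq> m^s \<subseteq> xA.\<close>

lemma ideal_pow_subset_principal_of_stable:
  assumes s: "ideal_pow m s \<subseteq> x *o UNIV"
    and k: "ideal_pow m k \<subseteq> x *o UNIV + ideal_pow m (Suc k)"
  shows "ideal_pow m k \<subseteq> x *o UNIV"
proof -
  have step: "ideal_pow m (k + j) \<subseteq> x *o UNIV + ideal_pow m (Suc (k + j))" for j
  proof (induction j)
    case (Suc j)
    then show ?case using ideal_pow_Suc_subset_principal_plus[of m "k + j" x] by simp
  qed (use k in simp)
  have "ideal_pow m k \<subseteq> x *o UNIV + ideal_pow m (k + j)" for j
  proof (induction j)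
    case 0
    show ?case by (simp add: ideal_subset_set_plus_right[OF ideal_principal])
  next
    case (Suc j)
    have "ideal_pow m k \<subseteq> x *o UNIV + (x *o UNIV + ideal_pow m (Suc (k + j)))"
      using Suc.IH set_plus_mono2[OF order_refl step[of j]] by blast
    also have "\<dots> \<subseteq> x *o UNIV + ideal_pow m (Suc (k + j))"
      unfolding add.assoc[symmetric]
      by (intro set_plus_mono2 ideal_set_plus_subset ideal_principal) auto
    finally show ?case by simp
  qed
  moreover have "ideal_pow m (k + s) \<subseteq> x *o UNIV" using ideal_pow_antimono[of s "k + s" m] s by auto
  ultimately show ?thesis using ideal_set_plus_subset[OF ideal_principal] by blast
qed

lemma principal_plus_ideal_pow_strict_mono:
  assumes s: "ideal_pow m s \<subseteq> x *o UNIV" and k: "\<not> ideal_pow m k \<subseteq> x *o UNIV"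
  shows "x *o UNIV + ideal_pow m (Suc k) \<subset> x *o UNIV + ideal_pow m k"
proof
  show "x *o UNIV + ideal_pow m (Suc k) \<subseteq> x *o UNIV + ideal_pow m k"
    by (intro set_plus_mono2 order_refl ideal_pow_Suc_subset)
  show "x *o UNIV + ideal_pow m (Suc k) \<noteq> x *o UNIV + ideal_pow m k"
  proof
    assume "x *o UNIV + ideal_pow m (Suc k) = x *o UNIV + ideal_pow m k"
    then have "ideal_pow m k \<subseteq> x *o UNIV + ideal_pow m (Suc k)"
      using ideal_subset_set_plus_right[OF ideal_principal] by metis
    then show False using ideal_pow_subset_principal_of_stable[OF s] k by blast
  qed
qed

text \<open>If m^l were not contained in xA, then xA followed by the ideals xA + m^k, k = l, ..., 0,
  would be a strict chain of length l + 1 from xA to A.\<close>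

lemma ideal_pow_length_subset_principal:
  assumes l: "module_length (*) (x *o UNIV) UNIV = enat l" and s: "ideal_pow m s \<subseteq> x *o UNIV"
  shows "ideal_pow m l \<subseteq> x *o UNIV"
proof (rule ccontr)
  assume nl: "\<not> ideal_pow m l \<subseteq> x *o UNIV"
  define D where "D k = x *o UNIV + ideal_pow m k" for k
  have strict: "D (Suc k) \<subset> D k" if "k \<le> l" for k
    using principal_plus_ideal_pow_strict_mono[OF s] nl ideal_pow_antimono[OF that, of m]
    unfolding D_def by blast
  have "x *o UNIV \<subset> D l"
    using nl ideal_subset_set_plus_left[OF ideal_ideal_pow] ideal_subset_set_plus_right[OF ideal_principal]
    unfolding D_def by blast
  define E where "E i = (if i = 0 then x *o UNIV else D (Suc l - i))" for i
  have "strict_chain (*) (x *o UNIV) UNIV (Suc l) E"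
    unfolding strict_chain_def
  proof (intro conjI allI impI)
    show "E 0 = x *o UNIV" unfolding E_def by simp
    have "UNIV \<subseteq> x *o UNIV + UNIV" by (rule ideal_subset_set_plus_right[OF ideal_principal])
    then show "E (Suc l) = UNIV" unfolding E_def D_def by auto
    fix i
    show "R.subspace (E i)" if "i \<le> Suc l"
      using ideal_set_plus[OF ideal_principal ideal_ideal_pow] ideal_principal
      unfolding E_def D_def ideal_iff_subspace by (cases "i = 0") simp_all
    show "E i \<subset> E (Suc i)" if i: "i < Suc l"
    proof (cases "i = 0")
      case True
      then show ?thesis using \<open>x *o UNIV \<subset> D l\<close> unfolding E_def by simp
    next
      case False
      then have "E i = D (Suc (l - i))" "E (Suc i) = D (l - i)"
        unfolding E_def using i by (auto simp: Suc_diff_le)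
      then show ?thesis using strict[of "l - i"] by simp
    qed
  qed
  then have "enat (Suc l) \<le> module_length (*) (x *o UNIV) UNIV" by (rule R.strict_chain_le_module_length)
  then show False using l by simp
qed

lemma length_principal_eq_multiplicity:
  fixes m :: "'a::comm_ring_1 set"
  assumes loc: "local_ring m" and noeth: "noetherian_ring TYPE('a)" and dim: "krull_dim TYPE('a) = 1"
    and reg: "nonzerodivisor (*) UNIV x" and s: "ideal_pow m s \<subseteq> x *o UNIV"
    and colon: "\<And>n. n0 \<le> n \<Longrightarrow> {a. x * a \<in> ideal_pow m (Suc n)} = ideal_pow m n"
  shows "module_length (*) (x *o UNIV) UNIV = enat (multiplicity m)"
proof -
  define len where "len n = the_enat (module_length (*) (ideal_pow m n) UNIV)" for n
  have len: "module_length (*) (ideal_pow m n) UNIV = enat (len n)" for n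
    unfolding len_def using module_length_ideal_pow_finite[OF loc noeth, of n] by auto
  have split: "module_length (*) (ideal_pow m n) UNIV =
      module_length (*) (ideal_pow m n) (x *o UNIV) + module_length (*) (x *o UNIV) UNIV"
    if "s \<le> n" for n
    using ideal_pow_antimono[OF that] s ideal_ideal_pow ideal_principal
    by (intro R.module_length_add) (auto simp: ideal_iff_subspace)
  obtain l where l: "module_length (*) (x *o UNIV) UNIV = enat l"
    using split[of s] len[of s] by (cases "module_length (*) (x *o UNIV) UNIV") auto
  have "len (Suc n) = len n + l" if "max n0 s \<le> n" for n
  proof -
    have "ideal_pow m (Suc n) \<subseteq> x *o UNIV" using ideal_pow_antimono[of s "Suc n"] s that by auto
    then have "ideal_pow m (Suc n) = x *o ideal_pow m n"
      using colon[of n] that by (auto simp: elt_set_times_def)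
    then have "module_length (*) (ideal_pow m (Suc n)) (x *o UNIV) = module_length (*) (ideal_pow m n) UNIV"
      using module_length_mult_nonzerodivisor[OF reg] by simp
    then show ?thesis using split[of "Suc n"] that len l by simp
  qed
  then have "multiplicity m = l" by (rule multiplicity_dim_one_eq[OF dim len])
  then show ?thesis using l by simp
qed

lemma ideal_pow_multiplicity_subset_principal:
  fixes m :: "'a::comm_ring_1 set"
  assumes loc: "local_ring m" and noeth: "noetherian_ring TYPE('a)" and dim: "krull_dim TYPE('a) = 1"
    and sup: "superficial (*) m UNIV x" and reg: "nonzerodivisor (*) UNIV x"
  shows "ideal_pow m (multiplicity m) \<subseteq> x *o UNIV"
proof -
  obtain s where s: "ideal_pow m s \<subseteq> x *o UNIV"
    by (rule dim_one_ideal_pow_subset_principal[OF loc noeth dim reg])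
  obtain c where c: "\<forall>n>c. {a. x * a \<in> ideal_pow m n} \<inter> ideal_pow m c = ideal_pow m (n - 1)"
    and x: "x \<in> m"
    using sup unfolding superficial_ring_iff by blast
  have "module_length (*) (x *o UNIV) UNIV = enat (multiplicity m)"
    using colon_ideal_pow_eq[OF x reg s c]
    by (intro length_principal_eq_multiplicity[OF loc noeth dim reg s, of "s + c"]) auto
  then show ?thesis using s by (rule ideal_pow_length_subset_principal)
qed

section \<open>Superficial elements\<close>

lemma ideal_smult_mono: "module s \<Longrightarrow> I \<subseteq> I' \<Longrightarrow> ideal_smult s I N \<subseteq> ideal_smult s I' N"
  unfolding ideal_smult_def by (intro module.span_mono) blast+

lemma ideal_smult_mem: "module s \<Longrightarrow> r \<in> I \<Longrightarrow> v \<in> N \<Longrightarrow> s r v \<in> ideal_smult s I N"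
  unfolding ideal_smult_def by (rule module.span_base) blast+

lemma zero_mem_ideal_smult: "module s \<Longrightarrow> 0 \<in> ideal_smult s I N"
  unfolding ideal_smult_def by (rule module.span_zero)

lemma ideal_smult_subset_scale_image:
  assumes mod: "module s" and L: "module.subspace s L" and I: "I \<subseteq> z *o UNIV"
  shows "ideal_smult s I L \<subseteq> s z ` L"
proof -
  interpret L: module s by (rule mod)
  show ?thesis unfolding ideal_smult_def
  proof (rule L.span_minimal)
    show "L.subspace (s z ` L)" by (rule L.subspace_scale_image[OF L])
    show "{s r v |r v. r \<in> I \<and> v \<in> L} \<subseteq> s z ` L"
    proof
      fix w assume "w \<in> {s r v |r v. r \<in> I \<and> v \<in> L}"
      then obtain r v where rv: "r \<in> I" "v \<in> L" "w = s r v" by blast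
      then obtain t where "r = z * t" using I by (auto simp: elt_set_times_def)
      then have "w = s z (s t v)" using rv by (simp add: L.scale_scale)
      then show "w \<in> s z ` L" using L.subspace_scale[OF L rv(2)] by blast
    qed
  qed
qed

lemma module_hom_ideal_smult_image_subset:
  assumes hom: "module_hom s1 s2 f" and N: "f ` N \<subseteq> N'"
  shows "f ` ideal_smult s1 I N \<subseteq> ideal_smult s2 I N'"
proof -
  interpret module_hom s1 s2 f by (rule hom)
  have "f ` {s1 r v |r v. r \<in> I \<and> v \<in> N} \<subseteq> {s2 r v |r v. r \<in> I \<and> v \<in> N'}"
    using N by (auto simp: scale) (blast intro: imageI)
  then show ?thesis unfolding ideal_smult_def span_image[symmetric] by (rule m2.span_mono)
qed

lemma module_sum3_scale:
  assumes "module s1" "module s2"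
  shows "module (sum3_scale s1 s2)"
proof -
  interpret M: module s1 by (rule assms(1))
  interpret L: module s2 by (rule assms(2))
  show ?thesis
    by standard (auto simp: sum3_scale_def M.scale_right_distrib M.scale_left_distrib
        L.scale_right_distrib L.scale_left_distrib algebra_simps)
qed

lemma module_ring: "module ((*) :: 'a::comm_ring_1 \<Rightarrow> 'a \<Rightarrow> 'a)"
  by (rule R.module_axioms)

lemma subspace_ideal_smult: "module s \<Longrightarrow> module.subspace s (ideal_smult s I N)"
  unfolding ideal_smult_def by (rule module.subspace_span)

lemma subspace_sum3:
  assumes mod1: "module s1" and mod2: "module s2"
    and "R.subspace P1" "module.subspace s1 P2" "module.subspace s2 P3"
  shows "module.subspace (sum3_scale s1 s2) (P1 \<times> P2 \<times> P3)"
proof -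
  interpret M: module s1 by (rule mod1)
  interpret L: module s2 by (rule mod2)
  show ?thesis
    using assms(3-5) unfolding module.subspace_def[OF module_sum3_scale[OF mod1 mod2]]
      R.subspace_def M.subspace_def L.subspace_def
    by (auto simp: sum3_scale_def zero_prod_def)
qed

lemma ideal_smult_sum3_subset:
  assumes mod1: "module s1" and mod2: "module s2"
  shows "ideal_smult (sum3_scale s1 s2) I (A \<times> M \<times> L) \<subseteq>
           ideal_smult (*) I A \<times> ideal_smult s1 I M \<times> ideal_smult s2 I L"
    (is "_ \<subseteq> ?rhs")
proof -
  interpret S: module "sum3_scale s1 s2" by (rule module_sum3_scale[OF mod1 mod2])
  have "S.subspace ?rhs"
    using mod1 mod2 by (intro subspace_sum3 subspace_ideal_smult module_ring)
  moreover have "{sum3_scale s1 s2 r v |r v. r \<in> I \<and> v \<in> A \<times> M \<times> L} \<subseteq> ?rhs"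
  proof
    fix q assume "q \<in> {sum3_scale s1 s2 r v |r v. r \<in> I \<and> v \<in> A \<times> M \<times> L}"
    then obtain r a u w where "r \<in> I" "a \<in> A" "u \<in> M" "w \<in> L" "q = sum3_scale s1 s2 r (a, u, w)"
      by auto
    then show "q \<in> ?rhs"
      using ideal_smult_mem[OF module_ring] ideal_smult_mem[OF mod1] ideal_smult_mem[OF mod2]
      by (simp add: sum3_scale_def)
  qed
  ultimately show ?thesis unfolding ideal_smult_def[of "sum3_scale s1 s2"] by (rule S.span_minimal[rotated])
qed

lemma ideal_smult_sum3:
  assumes mod1: "module s1" and mod2: "module s2" and "0 \<in> A" "0 \<in> M" "0 \<in> L"
  shows "ideal_smult (sum3_scale s1 s2) I (A \<times> M \<times> L) =
           ideal_smult (*) I A \<times> ideal_smult s1 I M \<times> ideal_smult s2 I L"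
    (is "?lhs = ?rhs")
proof
  show "?lhs \<subseteq> ?rhs" by (rule ideal_smult_sum3_subset[OF mod1 mod2])
  interpret M: module s1 by (rule mod1)
  interpret L: module s2 by (rule mod2)
  interpret S: module "sum3_scale s1 s2" by (rule module_sum3_scale[OF mod1 mod2])
  let ?S = "sum3_scale s1 s2"
  have hom1: "module_hom (*) ?S (\<lambda>a. (a, 0, 0))"
    by unfold_locales (simp_all add: sum3_scale_def)
  have hom2: "module_hom s1 ?S (\<lambda>u. (0, u, 0))"
    by unfold_locales (simp_all add: sum3_scale_def)
  have hom3: "module_hom s2 ?S (\<lambda>w. (0, 0, w))"
    by unfold_locales (simp_all add: sum3_scale_def)
  show "?rhs \<subseteq> ?lhs"
  proof
    fix p assume "p \<in> ?rhs"
    then obtain a u w where p: "p = (a, u, w)" and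
      a: "a \<in> ideal_smult (*) I A" and u: "u \<in> ideal_smult s1 I M" and w: "w \<in> ideal_smult s2 I L"
      by (cases p) auto
    have i1: "(\<lambda>a. (a, 0, 0)) ` ideal_smult (*) I A \<subseteq> ?lhs"
      by (rule module_hom_ideal_smult_image_subset[OF hom1]) (use assms(3-5) in auto)
    have i2: "(\<lambda>u. (0, u, 0)) ` ideal_smult s1 I M \<subseteq> ?lhs"
      by (rule module_hom_ideal_smult_image_subset[OF hom2]) (use assms(3-5) in auto)
    have i3: "(\<lambda>w. (0, 0, w)) ` ideal_smult s2 I L \<subseteq> ?lhs"
      by (rule module_hom_ideal_smult_image_subset[OF hom3]) (use assms(3-5) in auto)
    have "(a, 0, 0) \<in> ?lhs" "(0, u, 0) \<in> ?lhs" "(0, 0, w) \<in> ?lhs"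
      using subsetD[OF i1 imageI[OF a]] subsetD[OF i2 imageI[OF u]] subsetD[OF i3 imageI[OF w]]
      by simp_all
    moreover have "p = (a, 0, 0) + (0, u, 0) + (0, 0, w)" using p by simp
    ultimately show "p \<in> ?lhs" unfolding ideal_smult_def by (simp only: S.span_add)
  qed
qed

lemma Times3_eq_nonempty_iff:
  assumes "B1 \<noteq> {}" "B2 \<noteq> {}" "B3 \<noteq> {}"
  shows "A1 \<times> A2 \<times> A3 = B1 \<times> B2 \<times> B3 \<longleftrightarrow> A1 = B1 \<and> A2 = B2 \<and> A3 = B3"
  using assms by (auto simp: times_eq_iff)

lemma superficial_sum3:
  assumes mod1: "module s1" and mod2: "module s2" and 0: "0 \<in> A" "0 \<in> M" "0 \<in> L"
    and sup: "superficial (sum3_scale s1 s2) m (A \<times> M \<times> L) x"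
  shows "superficial (*) m A x" and "superficial s1 m M x" and "superficial s2 m L x"
proof -
  let ?IA = "\<lambda>k. ideal_smult (*) (ideal_pow m k) A"
  let ?IM = "\<lambda>k. ideal_smult s1 (ideal_pow m k) M"
  let ?IL = "\<lambda>k. ideal_smult s2 (ideal_pow m k) L"
  have decomp: "ideal_smult (sum3_scale s1 s2) (ideal_pow m k) (A \<times> M \<times> L) = ?IA k \<times> ?IM k \<times> ?IL k"
    for k by (rule ideal_smult_sum3[OF mod1 mod2 0])
  obtain c where x: "x \<in> m" and "c > 0" and eq: "\<And>n. n > c \<Longrightarrow>
      {v \<in> A \<times> M \<times> L. sum3_scale s1 s2 x v \<in> ?IA n \<times> ?IM n \<times> ?IL n} \<inter> (?IA c \<times> ?IM c \<times> ?IL c)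
      = ?IA (n - 1) \<times> ?IM (n - 1) \<times> ?IL (n - 1)"
    using sup unfolding superficial_def decomp by blast
  have ne: "?IA k \<noteq> {}" "?IM k \<noteq> {}" "?IL k \<noteq> {}" for k
    using zero_mem_ideal_smult[OF module_ring] zero_mem_ideal_smult[OF mod1]
      zero_mem_ideal_smult[OF mod2] by blast+
  have components: "{v \<in> A \<times> M \<times> L. sum3_scale s1 s2 x v \<in> ?IA n \<times> ?IM n \<times> ?IL n} \<inter> (?IA c \<times> ?IM c \<times> ?IL c)
      = ({a \<in> A. x * a \<in> ?IA n} \<inter> ?IA c) \<times> ({u \<in> M. s1 x u \<in> ?IM n} \<inter> ?IM c) \<times>
        ({w \<in> L. s2 x w \<in> ?IL n} \<inter> ?IL c)" for n
    by (auto simp: sum3_scale_def)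
  have "{a \<in> A. x * a \<in> ?IA n} \<inter> ?IA c = ?IA (n - 1)"
      "{u \<in> M. s1 x u \<in> ?IM n} \<inter> ?IM c = ?IM (n - 1)"
      "{w \<in> L. s2 x w \<in> ?IL n} \<inter> ?IL c = ?IL (n - 1)" if "n > c" for n
    using eq[OF that] unfolding components Times3_eq_nonempty_iff[OF ne] by simp_all
  then show "superficial (*) m A x" "superficial s1 m M x" "superficial s2 m L x"
    unfolding superficial_def using x \<open>c > 0\<close> by blast+
qed

lemma depth_one_nonzerodivisor:
  assumes mod: "module s" and d: "depth s m N = 1"
  obtains y where "y \<in> m" "nonzerodivisor s N y"
proof -
  have "\<exists>xs. regular_seq s m N xs \<and> xs \<noteq> []"
  proof (rule ccontr)
    assume "\<not> ?thesis"
    then have "depth s m N \<le> 0" unfolding depth_def by (intro Sup_least) (auto simp: zero_enat_def)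
    then show False using d by simp
  qed
  then obtain xs where xs: "regular_seq s m N xs" "xs \<noteq> []" by blast
  have "xs ! 0 \<in> set xs" using xs(2) by simp
  then have "xs ! 0 \<in> m" using xs(1) unfolding regular_seq_def by blast
  moreover have "ideal_smult s (set (take 0 xs)) N = {0}"
    by (simp add: ideal_smult_def module.span_empty[OF mod])
  then have "nonzerodivisor s N (xs ! 0)"
    using xs unfolding regular_seq_def nonzerodivisor_def by force
  ultimately show ?thesis by (rule that)
qed

lemma fin_gen_module_ring: "fin_gen_module (*) (UNIV :: 'a::comm_ring_1 set)"
proof -
  have "R.span {1 :: 'a} = UNIV" by (auto simp: R.span_singleton)
  then show ?thesis unfolding fin_gen_module_def by (auto simp: ideal_iff_subspace[symmetric] ideal_UNIV)
qed

text \<open>If x v = 0, then w = y^c v lies in m^c N and is killed by x, so superficiality puts w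
  into every m^k N, hence into every z^j N; by Krull's intersection theorem w = 0.\<close>

lemma superficial_nonzerodivisor:
  fixes s :: "'a::comm_ring_1 \<Rightarrow> 'b::ab_group_add \<Rightarrow> 'b"
  assumes mod: "module s" and noeth: "noetherian_ring TYPE('a)" and loc: "local_ring m"
    and fg: "fin_gen_module s N"
    and y: "y \<in> m" "nonzerodivisor s N y"
    and z: "z \<in> m" "ideal_pow m t \<subseteq> z *o UNIV"
    and sup: "superficial s m N x"
  shows "nonzerodivisor s N x"
  unfolding nonzerodivisor_def
proof (intro ballI impI)
  interpret N: module s by (rule mod)
  obtain B where N: "N.subspace N" "finite B" "N.span B = N" using fg unfolding fin_gen_module_def by blast
  obtain c where c: "\<And>n. n > c \<Longrightarrow> {v \<in> N. s x v \<in> ideal_smult s (ideal_pow m n) N}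
      \<inter> ideal_smult s (ideal_pow m c) N = ideal_smult s (ideal_pow m (n - 1)) N"
    using sup unfolding superficial_def by blast
  fix v assume v: "v \<in> N" "s x v = 0"
  define w where "w = s (y ^ c) v"
  have wN: "w \<in> N" unfolding w_def by (rule N.subspace_scale[OF N(1) v(1)])
  have wc: "w \<in> ideal_smult s (ideal_pow m c) N"
    unfolding w_def by (rule ideal_smult_mem[OF mod power_mem_ideal_pow[OF y(1)] v(1)])
  have "s x w = s (y ^ c) (s x v)" unfolding w_def by (rule N.scale_left_commute)
  then have xw: "s x w = 0" using v(2) by simp
  have "w \<in> s (z ^ j) ` N" for j
  proof -
    have lt: "c < t * j + c + 1" by simp
    have "w \<in> {v \<in> N. s x v \<in> ideal_smult s (ideal_pow m (t * j + c + 1)) N}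
        \<inter> ideal_smult s (ideal_pow m c) N"
      using wN wc xw zero_mem_ideal_smult[OF mod] by simp
    then have "w \<in> ideal_smult s (ideal_pow m (t * j + c + 1 - 1)) N" unfolding c[OF lt] .
    then have "w \<in> ideal_smult s (ideal_pow m (t * j)) N"
      using ideal_smult_mono[OF mod ideal_pow_antimono[of "t * j" "t * j + c" m]] by auto
    then show ?thesis
      using ideal_smult_subset_scale_image[OF mod N(1) ideal_pow_mult_subset_principal_power[OF z(2)]]
      by blast
  qed
  then have "w \<in> (\<Inter>j. s (z ^ j) ` N.span B)" using N(3) by blast
  then have "w = 0" using N.krull_intersection[OF noeth loc z(1) N(2)] by simp
  then show "v = 0"
    using N.nonzerodivisor_power[OF N(1) y(2), of c] v(1) unfolding w_def nonzerodivisor_def by blast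
qed

section \<open>First syzygies\<close>

global_interpretation F: module "free_scale :: 'a::comm_ring_1 \<Rightarrow> (nat \<Rightarrow> 'a) \<Rightarrow> nat \<Rightarrow> 'a"
  by standard (auto simp: free_scale_def algebra_simps fun_eq_iff)

lemma free_scale_apply [simp]: "free_scale r u i = r * u i"
  by (simp add: free_scale_def)

lemma subspace_syzygy1:
  assumes "module s"
  shows "F.subspace (syzygy1 s g n)"
proof -
  interpret L: module s by (rule assms)
  show ?thesis
    unfolding syzygy1_def free_carrier_def
    by (rule F.subspaceI)
      (auto simp: L.scale_left_distrib sum.distrib simp flip: L.scale_scale L.scale_sum_right)
qed

lemma subspace_coeffs_in_ideal:
  assumes I: "ideal I"
  shows "F.subspace {u. \<forall>i. u i \<in> I}"
  by (rule F.subspaceI) (simp_all add: ideal_0[OF I] ideal_add[OF I] ideal_mult_left[OF I])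

lemma image_skip_lessThan:
  assumes "i < n"
  shows "(\<lambda>k. if k < i then k else Suc k) ` {..<n - 1} = {..<n} - {i}"
proof
  show "(\<lambda>k. if k < i then k else Suc k) ` {..<n - 1} \<subseteq> {..<n} - {i}" using assms by auto
  show "{..<n} - {i} \<subseteq> (\<lambda>k. if k < i then k else Suc k) ` {..<n - 1}"
  proof
    fix k assume k: "k \<in> {..<n} - {i}"
    show "k \<in> (\<lambda>k. if k < i then k else Suc k) ` {..<n - 1}"
    proof (cases "k < i")
      case True
      then show ?thesis using assms by (intro image_eqI[of _ _ k]) auto
    next
      case False
      then show ?thesis using k by (intro image_eqI[of _ _ "k - 1"]) auto
    qed
  qed
qed

lemma minimal_generators_not_redundant:
  assumes mod: "module s" and gens: "minimal_generators s L g n" and i: "i < n"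
  shows "g i \<notin> module.span s (g ` ({..<n} - {i}))"
proof
  interpret L: module s by (rule mod)
  let ?R = "{..<n} - {i}"
  assume gi: "g i \<in> L.span (g ` ?R)"
  have "g k \<in> L.span (g ` ?R)" if "k < n" for k
    using gi that L.span_base[of "g k" "g ` ?R"] by (cases "k = i") auto
  then have "g ` {..<n} \<subseteq> L.span (g ` ?R)" by blast
  then have "L.span (g ` {..<n}) \<subseteq> L.span (g ` ?R)" by (rule L.span_minimal) simp
  moreover have "L.span (g ` ?R) \<subseteq> L.span (g ` {..<n})" by (rule L.span_mono) blast
  ultimately have span: "L.span (g ` ?R) = L" using gens unfolding minimal_generators_def by blast
  define h where "h k = g (if k < i then k else Suc k)" for k
  have "h ` {..<n - 1} = g ` ?R"
    unfolding h_def image_skip_lessThan[OF i, symmetric] image_image ..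
  then have "L.span (h ` {..<n - 1}) = L" using span by simp
  moreover have "\<forall>k<n - 1. h k \<in> L" using gens unfolding minimal_generators_def h_def by auto
  ultimately have "n \<le> n - 1" using gens unfolding minimal_generators_def by blast
  then show False using i by simp
qed

lemma syzygy1_coeff_mem:
  assumes mod: "module s" and loc: "local_ring m" and gens: "minimal_generators s L g n"
    and u: "u \<in> syzygy1 s g n"
  shows "u i \<in> m"
proof (cases "i < n")
  case False
  then show ?thesis
    using u ideal_0[OF local_ring_ideal[OF loc]] unfolding syzygy1_def free_carrier_def by simp
next
  case True
  interpret L: module s by (rule mod)
  show ?thesis
  proof (rule ccontr)
    assume "u i \<notin> m"
    with loc obtain e where e: "1 = u i * e" by (rule local_ring_unitE)
    let ?R = "{..<n} - {i}"
    have "(\<Sum>k<n. s (u k) (g k)) = s (u i) (g i) + (\<Sum>k\<in>?R. s (u k) (g k))"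
      using True by (simp add: sum.remove)
    then have ui: "s (u i) (g i) = - (\<Sum>k\<in>?R. s (u k) (g k))"
      using u unfolding syzygy1_def by (simp add: eq_neg_iff_add_eq_0)
    have "g i = s (e * u i) (g i)" using e by (simp add: mult.commute)
    also have "\<dots> = s e (- (\<Sum>k\<in>?R. s (u k) (g k)))" by (simp flip: ui L.scale_scale)
    finally have gi: "g i = s e (- (\<Sum>k\<in>?R. s (u k) (g k)))" .
    have "(\<Sum>k\<in>?R. s (u k) (g k)) \<in> L.span (g ` ?R)"
      by (intro L.span_sum L.span_scale L.span_base) auto
    then have "g i \<in> L.span (g ` ?R)" unfolding gi by (intro L.span_scale L.span_neg)
    then show False using minimal_generators_not_redundant[OF mod gens True] by blast
  qed
qed

lemma ideal_smult_syzygy1_subset_coeffs: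
  assumes mod: "module s" and loc: "local_ring m" and gens: "minimal_generators s L g n"
  shows "ideal_smult free_scale (ideal_pow m k) (syzygy1 s g n)
           \<subseteq> syzygy1 s g n \<inter> {u. \<forall>i. u i \<in> ideal_pow m (Suc k)}"
  unfolding ideal_smult_def
proof (rule F.span_minimal)
  show "F.subspace (syzygy1 s g n \<inter> {u. \<forall>i. u i \<in> ideal_pow m (Suc k)})"
    by (intro F.subspace_inter subspace_syzygy1[OF mod] subspace_coeffs_in_ideal ideal_ideal_pow)
  show "{free_scale r v |r v. r \<in> ideal_pow m k \<and> v \<in> syzygy1 s g n}
      \<subseteq> syzygy1 s g n \<inter> {u. \<forall>i. u i \<in> ideal_pow m (Suc k)}"
  proof
    fix z assume "z \<in> {free_scale r v |r v. r \<in> ideal_pow m k \<and> v \<in> syzygy1 s g n}"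
    then obtain r v where rv: "r \<in> ideal_pow m k" "v \<in> syzygy1 s g n" "z = free_scale r v" by blast
    have "v i * r \<in> ideal_pow m (Suc k)" for i
      by (rule ideal_pow_mult_mem[OF syzygy1_coeff_mem[OF mod loc gens rv(2)] rv(1)])
    then show "z \<in> syzygy1 s g n \<inter> {u. \<forall>i. u i \<in> ideal_pow m (Suc k)}"
      using F.subspace_scale[OF subspace_syzygy1[OF mod] rv(2)] rv(3) by (simp add: mult.commute)
  qed
qed

lemma syzygy1_divisible:
  assumes mod: "module s" and gens: "minimal_generators s L g n" and reg: "nonzerodivisor s L x"
    and z: "z \<in> syzygy1 s g n" "\<forall>i. z i \<in> x *o UNIV"
  shows "z \<in> free_scale x ` syzygy1 s g n"
proof -
  interpret L: module s by (rule mod)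
  have "\<forall>i. \<exists>w. z i = x * w" using z(2) unfolding principal_eq_dvd by (auto elim: dvdE)
  then obtain W where W: "\<And>i. z i = x * W i" by metis
  define w where "w i = (if i < n then W i else 0)" for i
  have z0: "\<forall>i\<ge>n. z i = 0" and zs: "(\<Sum>i<n. s (z i) (g i)) = 0"
    using z(1) unfolding syzygy1_def free_carrier_def by auto
  have zw: "z = free_scale x w" unfolding w_def fun_eq_iff using W z0 by auto
  have "(\<Sum>i<n. s (w i) (g i)) \<in> L"
    using gens unfolding minimal_generators_def
    by (intro L.subspace_sum L.subspace_scale) (auto simp: L.subspace_span)
  moreover have "s x (\<Sum>i<n. s (w i) (g i)) = (\<Sum>i<n. s (z i) (g i))"
    unfolding L.scale_sum_right zw by (simp add: L.scale_scale)
  ultimately have "(\<Sum>i<n. s (w i) (g i)) = 0" using reg zs unfolding nonzerodivisor_def by simp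
  then have "w \<in> syzygy1 s g n" unfolding syzygy1_def free_carrier_def w_def by simp
  then show ?thesis using zw by blast
qed

lemma ideal_smult_syzygy1_subset_scale:
  assumes mod: "module s" and loc: "local_ring m" and gens: "minimal_generators s L g n"
    and x: "x \<in> m" and reg: "nonzerodivisor s L x" and e: "ideal_pow m e \<subseteq> x *o UNIV"
  shows "ideal_smult free_scale (ideal_pow m (e - 1)) (syzygy1 s g n) \<subseteq> free_scale x ` syzygy1 s g n"
proof -
  have "e \<noteq> 0"
  proof
    assume "e = 0"
    then have "1 \<in> x *o UNIV" using e by auto
    then show False using x local_ring_mem_iff[OF loc] by (auto simp: principal_eq_dvd)
  qed
  then have "ideal_smult free_scale (ideal_pow m (e - 1)) (syzygy1 s g n)
      \<subseteq> syzygy1 s g n \<inter> {u. \<forall>i. u i \<in> ideal_pow m e}"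
    using ideal_smult_syzygy1_subset_coeffs[OF mod loc gens, of "e - 1"] by simp
  also have "\<dots> \<subseteq> free_scale x ` syzygy1 s g n"
    using syzygy1_divisible[OF mod gens reg] e by blast
  finally show ?thesis .
qed

theorem lemma4p8:
  fixes m :: "'a::comm_ring_1 set"
    and sL :: "'a \<Rightarrow> 'b::ab_group_add \<Rightarrow> 'b"
    and L :: "'b set"
    and g :: "nat \<Rightarrow> 'b" and n :: nat and x :: 'a
  assumes CM: "cohen_macaulay_local m"
    and dim1: "krull_dim TYPE('a) = 1"
    and modL: "module sL"
    and MCM: "max_CM_module sL m L"
    and nonfree: "\<not> free_module sL L"
    and gens: "minimal_generators sL L g n"
    and sup: "superficial (sum3_scale free_scale sL) m
                 (UNIV \<times> syzygy1 sL g n \<times> L) x"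
  shows "ideal_smult free_scale (ideal_pow m (multiplicity m - 1)) (syzygy1 sL g n)
           \<subseteq> free_scale x ` syzygy1 sL g n"
proof -
  have noeth: "noetherian_ring TYPE('a)" and loc: "local_ring m" and depA: "depth (*) m UNIV = 1"
    using CM dim1 unfolding cohen_macaulay_local_def by auto
  have fgL: "fin_gen_module sL L" and depL: "depth sL m L = 1"
    using MCM dim1 unfolding max_CM_module_def by auto
  have "0 \<in> syzygy1 sL g n" by (rule F.subspace_0[OF subspace_syzygy1[OF modL]])
  moreover have "0 \<in> L" using module.subspace_0[OF modL] fgL unfolding fin_gen_module_def by blast
  ultimately have supA: "superficial (*) m UNIV x" and supL: "superficial sL m L x"
    using superficial_sum3[OF F.module_axioms modL UNIV_I _ _ sup] by blast+
  obtain y where y: "y \<in> m" "nonzerodivisor (*) UNIV y"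
    by (rule depth_one_nonzerodivisor[OF module_ring depA])
  obtain y' where y': "y' \<in> m" "nonzerodivisor sL L y'"
    by (rule depth_one_nonzerodivisor[OF modL depL])
  obtain t where t: "ideal_pow m t \<subseteq> y *o UNIV"
    by (rule dim_one_ideal_pow_subset_principal[OF loc noeth dim1 y(2)])
  have regA: "nonzerodivisor (*) UNIV x"
    by (rule superficial_nonzerodivisor[OF module_ring noeth loc fin_gen_module_ring y y(1) t supA])
  have regL: "nonzerodivisor sL L x"
    by (rule superficial_nonzerodivisor[OF modL noeth loc fgL y' y(1) t supL])
  have x: "x \<in> m" using sup unfolding superficial_def by blast
  have "ideal_pow m (multiplicity m) \<subseteq> x *o UNIV"
    by (rule ideal_pow_multiplicity_subset_principal[OF loc noeth dim1 supA regA])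
  then show ?thesis by (rule ideal_smult_syzygy1_subset_scale[OF modL loc gens x regL])
qed

end
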